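(* In generalized non-signalling theory (box world), let $X$ be a system of $n$ boxes and $Y$ a system of $m$ boxes, and let $p(\mathbf{a},\mathbf{b}|\mathbf{x},\mathbf{y})=p(\mathbf{a}|\mathbf{x})\,p(\mathbf{b}|\mathbf{y})$ be a product state of the joint system $XY$. Define, for any system $Z$ and state, $\hat H_{\mathrm{basic}}(Z)$ as the infimum of $H_M(Z)$ over all maximally informative measurements $M$ on $Z$ that are basic measurements. Then $\hat H_{\mathrm{basic}}(XY)=\hat H_{\mathrm{basic}}(X)+\hat H_{\mathrm{basic}}(Y)$, where $\hat H_{\mathrm{basic}}(X)$ and $\hat H_{\mathrm{basic}}(Y)$ are computed for the reduced states on $X$ and $Y$.
   Context: Box world (GNST): a box has a finite set of inputs and outputs. A system of boxes has states given by all collections $p(\mathbf{a}|\mathbf{x})\ge0$ (output tuple $\mathbf{a}$, input tuple $\mathbf{x}$) that are normalized ($\sum_{\mathbf{a}}p(\mathbf{a}|\mathbf{x})=1$) and no-signalling (for each box $i$, $\sum_{a_i}p(\mathbf{a}|\mathbf{x})$ is independent of $x_i$); reduced states are obtained by summing out outputs. An effect is any linear map $\mu$ from states to $[0,1]$, represented by a vector $\mathbf{R}$ if $\mu(\mathbf{p})=\sum p(\mathbf{a}|\mathbf{x})R(\mathbf{a}|\mathbf{x})$ for all states; a measurement is a finite set $\{(r,\mu_r)\}$ of effects summing to the constant map $1$, and $H_M(Z)$ denotes the Shannon entropy of the outcome distribution $(\mu_r(\mathbf{p}))_r$. A basic measurement: sequentially choose an unmeasured box and an input for it (the choice may depend on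 outputs already observed), observe the output, until all boxes are measured, then output a deterministic function $r(\mathbf{a})$ of the outputs. A measurement $N=\{(s,\nu_s)\}$ refines $M=\{(r,\mu_r)\}$ if the outcomes of $N$ can be partitioned into sets $P_r$ with $\mu_r=\sum_{s\in P_r}\nu_s$; the refinement is trivial if $\nu_s\propto\mu_r$ whenever $s\in P_r$; $M$ is maximally informative if it has no non-trivial refinement. *)

theory Defs
  imports Complex_Main "HOL-Library.FuncSet"
begin

(* A system of n boxes: box i (i < n) has input set ins i and output set outs i.
   Input/output labels are natural numbers; tuples are extensional functions on {..<n}. *)

definition tuples :: "nat \<Rightarrow> (nat \<Rightarrow> nat set) \<Rightarrow> (nat \<Rightarrow> nat) set" where
  "tuples n S = Pi\<^sub>E {..<n} S"

type_synonym bstate = "(nat \<Rightarrow> nat) \<Rightarrow> (nat \<Rightarrow> nat) \<Rightarrow> real"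
  (* p a x = p(a|x), output tuple a, input tuple x *)

definition is_state :: "nat \<Rightarrow> (nat \<Rightarrow> nat set) \<Rightarrow> (nat \<Rightarrow> nat set) \<Rightarrow> bstate \<Rightarrow> bool" where
  "is_state n ins outs p \<longleftrightarrow>
     (\<forall>a\<in>tuples n outs. \<forall>x\<in>tuples n ins. 0 \<le> p a x) \<and>
     (\<forall>x\<in>tuples n ins. (\<Sum>a\<in>tuples n outs. p a x) = 1) \<and>
     (\<forall>i<n. \<forall>a\<in>tuples n outs. \<forall>x\<in>tuples n ins. \<forall>x'\<in>ins i.
        (\<Sum>c\<in>outs i. p (a(i := c)) x) = (\<Sum>c\<in>outs i. p (a(i := c)) (x(i := x'))))"

definition is_effect :: "nat \<Rightarrow> (nat \<Rightarrow> nat set) \<Rightarrow> (nat \<Rightarrow> nat set) \<Rightarrow> (bstate \<Rightarrow> real) \<Rightarrow> bool" where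
  "is_effect n ins outs \<mu> \<longleftrightarrow>
     (\<exists>R :: (nat \<Rightarrow> nat) \<Rightarrow> (nat \<Rightarrow> nat) \<Rightarrow> real. \<forall>p. is_state n ins outs p \<longrightarrow>
         \<mu> p = (\<Sum>a\<in>tuples n outs. \<Sum>x\<in>tuples n ins. p a x * R a x)) \<and>
     (\<forall>p. is_state n ins outs p \<longrightarrow> 0 \<le> \<mu> p \<and> \<mu> p \<le> 1)"

(* a measurement: finite set of outcome labels together with an effect for each outcome *)
type_synonym meas = "nat set \<times> (nat \<Rightarrow> bstate \<Rightarrow> real)"

definition is_measurement :: "nat \<Rightarrow> (nat \<Rightarrow> nat set) \<Rightarrow> (nat \<Rightarrow> nat set) \<Rightarrow> meas \<Rightarrow> bool" where
  "is_measurement n ins outs M \<longleftrightarrow>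
     finite (fst M) \<and> (\<forall>r\<in>fst M. is_effect n ins outs (snd M r)) \<and>
     (\<forall>p. is_state n ins outs p \<longrightarrow> (\<Sum>r\<in>fst M. snd M r p) = 1)"

(* f encodes the partition of the outcomes of N into sets P_r = {s. f s = r} *)
definition refinement_via :: "nat \<Rightarrow> (nat \<Rightarrow> nat set) \<Rightarrow> (nat \<Rightarrow> nat set) \<Rightarrow> meas \<Rightarrow> meas \<Rightarrow> (nat \<Rightarrow> nat) \<Rightarrow> bool" where
  "refinement_via n ins outs N M f \<longleftrightarrow>
     (\<forall>s\<in>fst N. f s \<in> fst M) \<and>
     (\<forall>r\<in>fst M. \<forall>p. is_state n ins outs p \<longrightarrow>
        snd M r p = (\<Sum>s\<in>{s\<in>fst N. f s = r}. snd N s p))"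

definition trivial_via :: "nat \<Rightarrow> (nat \<Rightarrow> nat set) \<Rightarrow> (nat \<Rightarrow> nat set) \<Rightarrow> meas \<Rightarrow> meas \<Rightarrow> (nat \<Rightarrow> nat) \<Rightarrow> bool" where
  "trivial_via n ins outs N M f \<longleftrightarrow>
     (\<forall>s\<in>fst N. \<exists>c::real. \<forall>p. is_state n ins outs p \<longrightarrow> snd N s p = c * snd M (f s) p)"

definition max_informative :: "nat \<Rightarrow> (nat \<Rightarrow> nat set) \<Rightarrow> (nat \<Rightarrow> nat set) \<Rightarrow> meas \<Rightarrow> bool" where
  "max_informative n ins outs M \<longleftrightarrow>
     is_measurement n ins outs M \<and>
     (\<forall>N f. is_measurement n ins outs N \<and> refinement_via n ins outs N M f \<longrightarrow>
            trivial_via n ins outs N M f)"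

definition shannon :: "nat set \<Rightarrow> (nat \<Rightarrow> real) \<Rightarrow> real" where
  "shannon Os q = - (\<Sum>r\<in>Os. if q r = 0 then 0 else q r * log 2 (q r))"

definition H_M :: "meas \<Rightarrow> bstate \<Rightarrow> real" where
  "H_M M p = shannon (fst M) (\<lambda>r. snd M r p)"

(* Basic measurements. A history is a list of (box, input, output) triples;
   a strategy chooses the next (box, input) from the history observed so far. *)
type_synonym strategy = "(nat \<times> nat \<times> nat) list \<Rightarrow> nat \<times> nat"

definition valid_strategy :: "nat \<Rightarrow> (nat \<Rightarrow> nat set) \<Rightarrow> strategy \<Rightarrow> bool" where
  "valid_strategy n ins \<sigma> \<longleftrightarrow>
     (\<forall>h. distinct (map fst h) \<and> set (map fst h) \<subseteq> {..<n} \<and> length h < n \<longrightarrow>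
        fst (\<sigma> h) < n \<and> fst (\<sigma> h) \<notin> set (map fst h) \<and> snd (\<sigma> h) \<in> ins (fst (\<sigma> h)))"

fun run :: "strategy \<Rightarrow> (nat \<Rightarrow> nat) \<Rightarrow> nat \<Rightarrow> (nat \<times> nat \<times> nat) list" where
  "run \<sigma> a 0 = []"
| "run \<sigma> a (Suc k) = (let h = run \<sigma> a k in h @ [(fst (\<sigma> h), snd (\<sigma> h), a (fst (\<sigma> h)))])"

(* the input tuple used when the (full) output tuple is a *)
definition inputs_of :: "nat \<Rightarrow> strategy \<Rightarrow> (nat \<Rightarrow> nat) \<Rightarrow> (nat \<Rightarrow> nat)" where
  "inputs_of n \<sigma> a = restrict (\<lambda>i. fst (snd (hd (filter (\<lambda>e. fst e = i) (run \<sigma> a n))))) {..<n}"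

definition basic_meas :: "nat \<Rightarrow> (nat \<Rightarrow> nat set) \<Rightarrow> strategy \<Rightarrow> ((nat \<Rightarrow> nat) \<Rightarrow> nat) \<Rightarrow> meas" where
  "basic_meas n outs \<sigma> r =
     (r ` tuples n outs, \<lambda>k p. \<Sum>a\<in>{a\<in>tuples n outs. r a = k}. p a (inputs_of n \<sigma> a))"

definition is_basic :: "nat \<Rightarrow> (nat \<Rightarrow> nat set) \<Rightarrow> (nat \<Rightarrow> nat set) \<Rightarrow> meas \<Rightarrow> bool" where
  "is_basic n ins outs M \<longleftrightarrow> (\<exists>\<sigma> r. valid_strategy n ins \<sigma> \<and> M = basic_meas n outs \<sigma> r)"

definition H_basic :: "nat \<Rightarrow> (nat \<Rightarrow> nat set) \<Rightarrow> (nat \<Rightarrow> nat set) \<Rightarrow> bstate \<Rightarrow> real" where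
  "H_basic n ins outs p =
     Inf {H_M M p | M. is_basic n ins outs M \<and> max_informative n ins outs M}"

(* joint system XY: boxes 0..n-1 are X, boxes n..n+m-1 are Y *)
definition join_sets :: "nat \<Rightarrow> (nat \<Rightarrow> nat set) \<Rightarrow> (nat \<Rightarrow> nat set) \<Rightarrow> nat \<Rightarrow> nat set" where
  "join_sets n S T = (\<lambda>i. if i < n then S i else T (i - n))"

definition join_tup :: "nat \<Rightarrow> nat \<Rightarrow> (nat \<Rightarrow> nat) \<Rightarrow> (nat \<Rightarrow> nat) \<Rightarrow> (nat \<Rightarrow> nat)" where
  "join_tup n m a b = restrict (\<lambda>i. if i < n then a i else b (i - n)) {..<n+m}"

definition left_tup :: "nat \<Rightarrow> (nat \<Rightarrow> nat) \<Rightarrow> (nat \<Rightarrow> nat)" where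
  "left_tup n c = restrict c {..<n}"

definition right_tup :: "nat \<Rightarrow> nat \<Rightarrow> (nat \<Rightarrow> nat) \<Rightarrow> (nat \<Rightarrow> nat)" where
  "right_tup n m c = restrict (\<lambda>j. c (n + j)) {..<m}"

definition product_state :: "nat \<Rightarrow> nat \<Rightarrow> bstate \<Rightarrow> bstate \<Rightarrow> bstate" where
  "product_state n m pX pY = (\<lambda>c z. pX (left_tup n c) (left_tup n z) * pY (right_tup n m c) (right_tup n m z))"

(* reduced states (marginals); by no-signalling they do not depend on the fixed inputs of the other part *)
definition reduce_left :: "nat \<Rightarrow> nat \<Rightarrow> (nat \<Rightarrow> nat set) \<Rightarrow> (nat \<Rightarrow> nat set) \<Rightarrow> bstate \<Rightarrow> bstate" where
  "reduce_left n m insY outsY p = (\<lambda>a x.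
     \<Sum>b\<in>tuples m outsY. p (join_tup n m a b) (join_tup n m x (SOME y. y \<in> tuples m insY)))"

definition reduce_right :: "nat \<Rightarrow> nat \<Rightarrow> (nat \<Rightarrow> nat set) \<Rightarrow> (nat \<Rightarrow> nat set) \<Rightarrow> bstate \<Rightarrow> bstate" where
  "reduce_right n m insX outsX p = (\<lambda>b y.
     \<Sum>a\<in>tuples n outsX. p (join_tup n m a b) (join_tup n m (SOME x. x \<in> tuples n insX) y))"

end

theory Submission
  imports Defs
begin

text \<open>Maximally informative basic measurements are exactly the fine-grained ones, whose outcome
  determines the whole output tuple: merging two outcomes can be split again non-trivially, while
  the effect \<open>p(a|x(a))\<close> of a fine-grained outcome admits only proportional refinements, because
  deterministic local boxes span all no-signalling states. Hence \<open>H_basic\<close> is the least entropy of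
  the output distribution over all adaptive measurement strategies, and this minimum is computed by
  backward induction over the decision tree. For a product state, \<open>-u v log (u v)\<close> splits as
  \<open>-v (u log u) - u (v log v)\<close> at every leaf; propagating the split up the tree shows that no
  strategy on \<open>XY\<close> beats the sum of the optimal values for \<open>X\<close> and \<open>Y\<close>, and measuring \<open>X\<close>
  optimally first and then \<open>Y\<close> attains it.\<close>

section \<open>Deterministic boxes span the no-signalling functions\<close>

lemma tuples_mem: "a \<in> tuples n S \<Longrightarrow> i < n \<Longrightarrow> a i \<in> S i"
  unfolding tuples_def by auto

lemma tuples_out: "a \<in> tuples n S \<Longrightarrow> \<not> i < n \<Longrightarrow> a i = undefined"
  unfolding tuples_def by (auto simp: PiE_def extensional_def)

lemma tuples_eqI: "a \<in> tuples n S \<Longrightarrow> b \<in> tuples n S \<Longrightarrow> (\<And>i. i < n \<Longrightarrow> a i = b i) \<Longrightarrow> a = b"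
  unfolding tuples_def by (rule PiE_ext) auto

lemma tuples_upd: "a \<in> tuples n S \<Longrightarrow> i < n \<Longrightarrow> v \<in> S i \<Longrightarrow> a(i := v) \<in> tuples n S"
  unfolding tuples_def by (auto simp: PiE_def Pi_def extensional_def)

lemma tuples_Suc_upd: "a \<in> tuples n S \<Longrightarrow> v \<in> S n \<Longrightarrow> a(n := v) \<in> tuples (Suc n) S"
  unfolding tuples_def by (auto simp: PiE_def Pi_def extensional_def less_Suc_eq)

lemma tuples_Suc_restrict: "c \<in> tuples (Suc n) S \<Longrightarrow> restrict c {..<n} \<in> tuples n S"
  unfolding tuples_def by (auto simp: PiE_def Pi_def extensional_def)

lemma tuples_Suc_restrict_upd: "c \<in> tuples (Suc n) S \<Longrightarrow> (restrict c {..<n})(n := c n) = c"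
  unfolding tuples_def by (auto simp: PiE_def extensional_def fun_eq_iff less_Suc_eq)

lemma finite_tuples: "(\<And>i. i < n \<Longrightarrow> finite (S i)) \<Longrightarrow> finite (tuples n S)"
  unfolding tuples_def by (rule finite_PiE) auto

lemma tuples_nonempty: "(\<And>i. i < n \<Longrightarrow> S i \<noteq> {}) \<Longrightarrow> tuples n S \<noteq> {}"
  unfolding tuples_def by (simp add: PiE_eq_empty_iff)

definition det_boxes :: "nat \<Rightarrow> (nat \<Rightarrow> nat set) \<Rightarrow> (nat \<Rightarrow> nat set) \<Rightarrow> (nat \<Rightarrow> nat \<Rightarrow> nat) set" where
  "det_boxes n ins outs = Pi\<^sub>E {..<n} (\<lambda>i. ins i \<rightarrow>\<^sub>E outs i)"

definition det_state :: "nat \<Rightarrow> (nat \<Rightarrow> nat \<Rightarrow> nat) \<Rightarrow> bstate" where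
  "det_state n f = (\<lambda>a x. if \<forall>i<n. a i = f i (x i) then 1 else 0)"

definition no_signalling :: "nat \<Rightarrow> (nat \<Rightarrow> nat set) \<Rightarrow> (nat \<Rightarrow> nat set) \<Rightarrow> bstate \<Rightarrow> bool" where
  "no_signalling n ins outs q \<longleftrightarrow> (\<forall>i<n. \<forall>a\<in>tuples n outs. \<forall>x\<in>tuples n ins. \<forall>x'\<in>ins i.
     (\<Sum>c\<in>outs i. q (a(i := c)) x) = (\<Sum>c\<in>outs i. q (a(i := c)) (x(i := x'))))"

definition det_span :: "nat \<Rightarrow> (nat \<Rightarrow> nat set) \<Rightarrow> (nat \<Rightarrow> nat set) \<Rightarrow> bstate set" where
  "det_span n ins outs = {q. \<exists>\<beta>. \<forall>a\<in>tuples n outs. \<forall>x\<in>tuples n ins.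
     q a x = (\<Sum>f\<in>det_boxes n ins outs. \<beta> f * det_state n f a x)}"

lemma state_no_signalling: "is_state n ins outs p \<Longrightarrow> no_signalling n ins outs p"
  unfolding is_state_def no_signalling_def by blast

lemma finite_det_boxes: "(\<And>i. i < n \<Longrightarrow> finite (ins i) \<and> finite (outs i)) \<Longrightarrow> finite (det_boxes n ins outs)"
  unfolding det_boxes_def by (intro finite_PiE) (auto intro!: finite_PiE)

lemma det_boxes_app: "f \<in> det_boxes n ins outs \<Longrightarrow> i < n \<Longrightarrow> \<xi> \<in> ins i \<Longrightarrow> f i \<xi> \<in> outs i"
  unfolding det_boxes_def by auto

lemma det_boxes_out: "f \<in> det_boxes n ins outs \<Longrightarrow> \<not> i < n \<Longrightarrow> f i = undefined"
  unfolding det_boxes_def by (auto simp: PiE_def extensional_def)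

lemma det_boxes_app_out: "f \<in> det_boxes n ins outs \<Longrightarrow> i < n \<Longrightarrow> \<xi> \<notin> ins i \<Longrightarrow> f i \<xi> = undefined"
  unfolding det_boxes_def by (auto simp: PiE_def extensional_def)

lemma det_boxes_restrict: "f \<in> det_boxes n ins outs \<Longrightarrow> restrict f {..<n} = f"
  unfolding det_boxes_def by (auto simp: PiE_def extensional_def fun_eq_iff)

lemma det_boxes_Suc_upd: "f \<in> det_boxes n ins outs \<Longrightarrow> g \<in> ins n \<rightarrow>\<^sub>E outs n \<Longrightarrow> f(n := g) \<in> det_boxes (Suc n) ins outs"
  unfolding det_boxes_def by (auto simp: PiE_def Pi_def extensional_def less_Suc_eq)

lemma det_boxes_Suc_restrict: "f \<in> det_boxes (Suc n) ins outs \<Longrightarrow> restrict f {..<n} \<in> det_boxes n ins outs"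
  unfolding det_boxes_def by (auto simp: PiE_def Pi_def extensional_def)

lemma det_boxes_Suc_restrict_upd: "f \<in> det_boxes (Suc n) ins outs \<Longrightarrow> (restrict f {..<n})(n := f n) = f"
  unfolding det_boxes_def by (auto simp: PiE_def extensional_def fun_eq_iff less_Suc_eq)

lemma det_state_Suc_upd: "det_state (Suc n) (f(n := g)) c z = det_state n f c z * (if c n = g (z n) then 1 else 0)"
  unfolding det_state_def by (auto simp: less_Suc_eq)

lemma det_state_restrict: "det_state n f (restrict c {..<n}) (restrict z {..<n}) = det_state n f c z"
  unfolding det_state_def by auto

lemma det_state_is_state:
  assumes fin: "\<And>i. i < n \<Longrightarrow> finite (ins i) \<and> finite (outs i)"
    and f: "f \<in> det_boxes n ins outs"
  shows "is_state n ins outs (det_state n f)"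
  unfolding is_state_def
proof (intro conjI ballI allI impI)
  fix a x show "0 \<le> det_state n f a x" unfolding det_state_def by simp
next
  fix x assume x: "x \<in> tuples n ins"
  have "{a \<in> tuples n outs. \<forall>i<n. a i = f i (x i)} = {restrict (\<lambda>i. f i (x i)) {..<n}}"
  proof -
    have "restrict (\<lambda>i. f i (x i)) {..<n} \<in> tuples n outs"
      using f x unfolding tuples_def by (auto intro: det_boxes_app)
    then show ?thesis using tuples_eqI by fastforce
  qed
  moreover have "finite (tuples n outs)" using fin by (intro finite_tuples) auto
  ultimately show "(\<Sum>a\<in>tuples n outs. det_state n f a x) = 1"
    unfolding det_state_def by (simp add: sum.If_cases Int_def conj_commute)
next
  fix i a x x' assume i: "i < n" and x: "x \<in> tuples n ins" and x': "x' \<in> ins i"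
  have marginal: "(\<Sum>c\<in>outs i. det_state n f (a(i := c)) y) = (if \<forall>j<n. j \<noteq> i \<longrightarrow> a j = f j (y j) then 1 else 0)"
    if "y i \<in> ins i" for y
  proof -
    have "(\<Sum>c\<in>outs i. det_state n f (a(i := c)) y) =
        (\<Sum>c\<in>outs i. if c = f i (y i) then (if \<forall>j<n. j \<noteq> i \<longrightarrow> a j = f j (y j) then 1 else 0) else 0)"
      unfolding det_state_def by (rule sum.cong) (auto, metis i)
    then show ?thesis using det_boxes_app[OF f i that] fin[OF i] by (simp add: sum.delta')
  qed
  show "(\<Sum>c\<in>outs i. det_state n f (a(i := c)) x) = (\<Sum>c\<in>outs i. det_state n f (a(i := c)) (x(i := x')))"
    using marginal[of x] marginal[of "x(i := x')"] x' tuples_mem[OF x i] by simp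
qed

lemma det_span_cong:
  "q \<in> det_span n ins outs \<Longrightarrow> (\<And>a x. a \<in> tuples n outs \<Longrightarrow> x \<in> tuples n ins \<Longrightarrow> q' a x = q a x)
   \<Longrightarrow> q' \<in> det_span n ins outs"
  unfolding det_span_def by auto

lemma det_span_add:
  assumes "q1 \<in> det_span n ins outs" "q2 \<in> det_span n ins outs"
  shows "(\<lambda>a x. q1 a x + q2 a x) \<in> det_span n ins outs"
proof -
  obtain \<beta>1 \<beta>2 where
    "\<forall>a\<in>tuples n outs. \<forall>x\<in>tuples n ins. q1 a x = (\<Sum>f\<in>det_boxes n ins outs. \<beta>1 f * det_state n f a x)"
    "\<forall>a\<in>tuples n outs. \<forall>x\<in>tuples n ins. q2 a x = (\<Sum>f\<in>det_boxes n ins outs. \<beta>2 f * det_state n f a x)"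
    using assms unfolding det_span_def by auto
  then show ?thesis unfolding det_span_def
    by (auto intro!: exI[of _ "\<lambda>f. \<beta>1 f + \<beta>2 f"] simp: distrib_right sum.distrib)
qed

lemma det_span_diff:
  assumes "q1 \<in> det_span n ins outs" "q2 \<in> det_span n ins outs"
  shows "(\<lambda>a x. q1 a x - q2 a x) \<in> det_span n ins outs"
proof -
  obtain \<beta>1 \<beta>2 where
    "\<forall>a\<in>tuples n outs. \<forall>x\<in>tuples n ins. q1 a x = (\<Sum>f\<in>det_boxes n ins outs. \<beta>1 f * det_state n f a x)"
    "\<forall>a\<in>tuples n outs. \<forall>x\<in>tuples n ins. q2 a x = (\<Sum>f\<in>det_boxes n ins outs. \<beta>2 f * det_state n f a x)"
    using assms unfolding det_span_def by auto
  then show ?thesis unfolding det_span_def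
    by (auto intro!: exI[of _ "\<lambda>f. \<beta>1 f - \<beta>2 f"] simp: left_diff_distrib sum_subtractf)
qed

lemma det_span_sum:
  "finite K \<Longrightarrow> (\<And>k. k \<in> K \<Longrightarrow> w k \<in> det_span n ins outs) \<Longrightarrow> (\<lambda>a x. \<Sum>k\<in>K. w k a x) \<in> det_span n ins outs"
proof (induction K rule: finite_induct)
  case empty
  show ?case unfolding det_span_def by (auto intro!: exI[of _ "\<lambda>f. 0"])
next
  case (insert k K)
  then have "(\<lambda>a x. w k a x + (\<Sum>k\<in>K. w k a x)) \<in> det_span n ins outs"
    by (intro det_span_add) auto
  then show ?case using insert by simp
qed

lemma det_span_Suc_tensor:
  assumes q: "q \<in> det_span n ins outs" and g: "g \<in> ins n \<rightarrow>\<^sub>E outs n"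
    and fin: "finite (det_boxes (Suc n) ins outs)"
  shows "(\<lambda>c z. q (restrict c {..<n}) (restrict z {..<n}) * (if c n = g (z n) then 1 else 0))
           \<in> det_span (Suc n) ins outs"
proof -
  obtain \<beta> where \<beta>: "\<forall>a\<in>tuples n outs. \<forall>x\<in>tuples n ins. q a x = (\<Sum>f\<in>det_boxes n ins outs. \<beta> f * det_state n f a x)"
    using q unfolding det_span_def by auto
  let ?F = "det_boxes n ins outs" and ?G = "{f\<in>det_boxes (Suc n) ins outs. f n = g}"
  have bij: "bij_betw (\<lambda>f. f(n := g)) ?F ?G"
    by (rule bij_betw_byWitness[where f'="\<lambda>f. restrict f {..<n}"])
       (use g det_boxes_Suc_upd det_boxes_Suc_restrict det_boxes_Suc_restrict_upd
          in \<open>auto simp: fun_eq_iff det_boxes_out\<close>)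
  show ?thesis unfolding det_span_def
  proof (intro CollectI exI[of _ "\<lambda>f. if f n = g then \<beta> (restrict f {..<n}) else 0"] ballI)
    fix c z assume c: "c \<in> tuples (Suc n) outs" and z: "z \<in> tuples (Suc n) ins"
    have "(\<Sum>f\<in>det_boxes (Suc n) ins outs. (if f n = g then \<beta> (restrict f {..<n}) else 0) * det_state (Suc n) f c z)
        = (\<Sum>f\<in>?G. \<beta> (restrict f {..<n}) * det_state (Suc n) f c z)"
      using fin by (simp add: sum.inter_filter) (rule sum.cong, auto)
    also have "\<dots> = (\<Sum>f\<in>?F. \<beta> (restrict (f(n := g)) {..<n}) * det_state (Suc n) (f(n := g)) c z)"
      using sum.reindex_bij_betw[OF bij, of "\<lambda>f. \<beta> (restrict f {..<n}) * det_state (Suc n) f c z"] by simp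
    also have "\<dots> = (\<Sum>f\<in>?F. \<beta> f * det_state n f (restrict c {..<n}) (restrict z {..<n}))
                   * (if c n = g (z n) then 1 else 0)"
      unfolding sum_distrib_right
      by (rule sum.cong[OF refl]) (auto simp: det_state_Suc_upd det_state_restrict det_boxes_restrict)
    also have "\<dots> = q (restrict c {..<n}) (restrict z {..<n}) * (if c n = g (z n) then 1 else 0)"
      using \<beta> tuples_Suc_restrict[OF c] tuples_Suc_restrict[OF z] by simp
    finally show "q (restrict c {..<n}) (restrict z {..<n}) * (if c n = g (z n) then 1 else 0) =
        (\<Sum>f\<in>det_boxes (Suc n) ins outs. (if f n = g then \<beta> (restrict f {..<n}) else 0) * det_state (Suc n) f c z)"
      by simp
  qed
qed

text \<open>A one-box no-signalling table \<open>f \<xi> \<alpha>\<close> (input \<open>\<xi>\<close>, output \<open>\<alpha>\<close>) as a combination of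
  deterministic responses: the constant responses \<open>\<beta>\<close>, plus for each input \<open>\<xi>' \<noteq> \<eta>0\<close> the responses
  that answer \<open>\<beta>\<close> at \<open>\<xi>'\<close> and \<open>\<alpha>0\<close> elsewhere. The latter contribute nothing at the other inputs
  because their coefficients sum to zero, by no-signalling.\<close>

lemma one_box_decomposition:
  fixes f :: "nat \<Rightarrow> nat \<Rightarrow> real"
  assumes fin: "finite Is" "finite Os" and \<xi>: "\<xi> \<in> Is" and \<alpha>: "\<alpha> \<in> Os"
    and ns: "\<And>\<xi>'. \<xi>' \<in> Is \<Longrightarrow> (\<Sum>\<beta>\<in>Os. f \<xi>' \<beta>) = (\<Sum>\<beta>\<in>Os. f \<eta>0 \<beta>)"
  shows "f \<xi> \<alpha> = (\<Sum>\<beta>\<in>Os. f \<eta>0 \<beta> * (if \<alpha> = \<beta> then 1 else 0))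
     + (\<Sum>\<xi>'\<in>Is - {\<eta>0}. \<Sum>\<beta>\<in>Os. (f \<xi>' \<beta> - f \<eta>0 \<beta>) * (if \<alpha> = (if \<xi> = \<xi>' then \<beta> else \<alpha>0) then 1 else 0))"
proof -
  define w where "w \<xi>' \<beta> = f \<xi>' \<beta> - f \<eta>0 \<beta>" for \<xi>' \<beta>
  have single: "(\<Sum>\<beta>\<in>Os. w \<xi>' \<beta> * (if \<alpha> = (if \<xi> = \<xi>' then \<beta> else \<alpha>0) then 1 else 0))
      = (if \<xi>' = \<xi> then w \<xi> \<alpha> else 0)" if "\<xi>' \<in> Is" for \<xi>'
  proof (cases "\<xi>' = \<xi>")
    case True
    then show ?thesis using fin \<alpha> by (simp add: if_distrib[of "\<lambda>t. _ * t"] cong: if_cong)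
  next
    case False
    have "(\<Sum>\<beta>\<in>Os. w \<xi>' \<beta>) = 0" using ns[OF that] by (simp add: w_def sum_subtractf)
    with False show ?thesis by (simp flip: sum_distrib_right)
  qed
  have "(\<Sum>\<xi>'\<in>Is - {\<eta>0}. \<Sum>\<beta>\<in>Os. w \<xi>' \<beta> * (if \<alpha> = (if \<xi> = \<xi>' then \<beta> else \<alpha>0) then 1 else 0))
      = (\<Sum>\<xi>'\<in>Is - {\<eta>0}. if \<xi>' = \<xi> then w \<xi> \<alpha> else 0)"
    by (rule sum.cong) (simp_all add: single)
  also have "\<dots> = w \<xi> \<alpha>" using fin \<xi> by (simp add: w_def)
  finally show ?thesis unfolding w_def using fin \<alpha> by (simp add: if_distrib[of "\<lambda>t. _ * t"] cong: if_cong)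
qed

lemma no_signalling_fix_last:
  assumes ns: "no_signalling (Suc n) ins outs q" and "\<xi> \<in> ins n" "\<alpha> \<in> outs n"
  shows "no_signalling n ins outs (\<lambda>a x. q (a(n := \<alpha>)) (x(n := \<xi>)))"
  unfolding no_signalling_def
proof (intro allI impI ballI)
  fix i a x x' assume i: "i < n" and a: "a \<in> tuples n outs" and x: "x \<in> tuples n ins" and x': "x' \<in> ins i"
  have "a(n := \<alpha>) \<in> tuples (Suc n) outs" "x(n := \<xi>) \<in> tuples (Suc n) ins"
    using a x assms by (simp_all add: tuples_Suc_upd)
  with ns[unfolded no_signalling_def, rule_format, of i] i x'
  have "(\<Sum>c\<in>outs i. q ((a(n := \<alpha>))(i := c)) (x(n := \<xi>))) =
        (\<Sum>c\<in>outs i. q ((a(n := \<alpha>))(i := c)) ((x(n := \<xi>))(i := x')))" by simp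
  with i show "(\<Sum>c\<in>outs i. q ((a(i := c))(n := \<alpha>)) (x(n := \<xi>))) =
      (\<Sum>c\<in>outs i. q ((a(i := c))(n := \<alpha>)) ((x(i := x'))(n := \<xi>)))"
    by (simp add: fun_upd_twist)
qed

lemma det_span_Suc:
  assumes fin: "finite (ins n)" "finite (outs n)" "finite (det_boxes (Suc n) ins outs)"
    and \<eta>0: "\<eta>0 \<in> ins n" and \<alpha>0: "\<alpha>0 \<in> outs n" and ns: "no_signalling (Suc n) ins outs q"
    and span: "\<And>\<xi> \<alpha>. \<xi> \<in> ins n \<Longrightarrow> \<alpha> \<in> outs n \<Longrightarrow> (\<lambda>a x. q (a(n := \<alpha>)) (x(n := \<xi>))) \<in> det_span n ins outs"
  shows "q \<in> det_span (Suc n) ins outs"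
proof -
  define tr :: "(nat \<Rightarrow> nat) \<Rightarrow> nat \<Rightarrow> nat" where "tr c = restrict c {..<n}" for c
  define Q where "Q \<xi> \<alpha> = (\<lambda>a x. q (a(n := \<alpha>)) (x(n := \<xi>)))" for \<xi> \<alpha>
  define W where "W \<xi> \<beta> = (\<lambda>a x. Q \<xi> \<beta> a x - Q \<eta>0 \<beta> a x)" for \<xi> \<beta>
  define ind :: "bool \<Rightarrow> real" where "ind P = (if P then 1 else 0)" for P
  define resp where "resp \<xi> \<beta> = restrict (\<lambda>\<xi>'. if \<xi>' = \<xi> then \<beta> else \<alpha>0) (ins n)" for \<xi> \<beta>
  have tensor_sum: "(\<lambda>c z. \<Sum>k\<in>K. w k (tr c) (tr z) * ind (c n = g k (z n))) \<in> det_span (Suc n) ins outs"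
    if "finite K" "\<And>k. k \<in> K \<Longrightarrow> w k \<in> det_span n ins outs \<and> g k \<in> ins n \<rightarrow>\<^sub>E outs n" for K w g
    using that det_span_Suc_tensor[OF _ _ fin(3)] unfolding tr_def ind_def by (intro det_span_sum) auto
  define T where "T c z = (\<Sum>\<beta>\<in>outs n. Q \<eta>0 \<beta> (tr c) (tr z) * ind (c n = restrict (\<lambda>_. \<beta>) (ins n) (z n)))
     + (\<Sum>\<xi>\<in>ins n - {\<eta>0}. \<Sum>\<beta>\<in>outs n. W \<xi> \<beta> (tr c) (tr z) * ind (c n = resp \<xi> \<beta> (z n)))" for c z
  have "T \<in> det_span (Suc n) ins outs"
    unfolding T_def
  proof (intro det_span_add det_span_sum[OF finite_Diff[OF fin(1)]])
    show "(\<lambda>c z. \<Sum>\<beta>\<in>outs n. Q \<eta>0 \<beta> (tr c) (tr z) * ind (c n = restrict (\<lambda>_. \<beta>) (ins n) (z n)))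
        \<in> det_span (Suc n) ins outs"
      by (rule tensor_sum[of "outs n" "Q \<eta>0" "\<lambda>\<beta>. restrict (\<lambda>_. \<beta>) (ins n)"]) (auto simp: fin Q_def span \<eta>0)
    fix \<xi> assume "\<xi> \<in> ins n - {\<eta>0}"
    then show "(\<lambda>c z. \<Sum>\<beta>\<in>outs n. W \<xi> \<beta> (tr c) (tr z) * ind (c n = resp \<xi> \<beta> (z n))) \<in> det_span (Suc n) ins outs"
      using \<alpha>0 \<eta>0 by (intro tensor_sum[of "outs n" "W \<xi>" "resp \<xi>"])
        (auto simp: fin W_def Q_def resp_def intro!: det_span_diff span)
  qed
  then show ?thesis
  proof (rule det_span_cong)
    fix c z assume c: "c \<in> tuples (Suc n) outs" and z: "z \<in> tuples (Suc n) ins"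
    have "(tr c)(n := \<alpha>) = c(n := \<alpha>)" "(tr z)(n := \<xi>) = z(n := \<xi>)" for \<alpha> \<xi>
      using tuples_Suc_restrict_upd[OF c] tuples_Suc_restrict_upd[OF z] unfolding tr_def by (metis fun_upd_upd)+
    then have Q_tr: "Q \<xi> \<alpha> (tr c) (tr z) = q (c(n := \<alpha>)) (z(n := \<xi>))" for \<xi> \<alpha>
      unfolding Q_def by simp
    have ns_last: "(\<Sum>\<beta>\<in>outs n. Q \<xi> \<beta> (tr c) (tr z)) = (\<Sum>\<beta>\<in>outs n. Q \<eta>0 \<beta> (tr c) (tr z))"
      if "\<xi> \<in> ins n" for \<xi>
      using ns[unfolded no_signalling_def, rule_format, of n c "z(n := \<xi>)" \<eta>0] c z that \<eta>0
      by (simp add: Q_tr tuples_upd)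
    have "z n \<in> ins n" "c n \<in> outs n" using c z tuples_mem by blast+
    with one_box_decomposition[OF fin(1,2) this, of "\<lambda>\<xi> \<alpha>. Q \<xi> \<alpha> (tr c) (tr z)", OF ns_last]
    show "q c z = T c z" unfolding T_def W_def resp_def ind_def by (simp add: Q_tr)
  qed
qed

theorem no_signalling_in_det_span:
  assumes "\<And>i. i < n \<Longrightarrow> finite (ins i) \<and> ins i \<noteq> {} \<and> finite (outs i) \<and> outs i \<noteq> {}"
    and "no_signalling n ins outs q"
  shows "q \<in> det_span n ins outs"
  using assms
proof (induction n arbitrary: q)
  case 0
  show ?case unfolding det_span_def det_boxes_def tuples_def
    by (auto intro!: exI[of _ "\<lambda>_. q (\<lambda>_. undefined) (\<lambda>_. undefined)"] simp: det_state_def)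
next
  case (Suc n)
  obtain \<eta>0 \<alpha>0 where "\<eta>0 \<in> ins n" "\<alpha>0 \<in> outs n" using Suc.prems(1)[of n] by auto
  moreover have "finite (det_boxes (Suc n) ins outs)" using Suc.prems(1) by (intro finite_det_boxes) auto
  ultimately show ?case
    using Suc.prems Suc.IH no_signalling_fix_last[OF Suc.prems(2)] by (intro det_span_Suc) auto
qed


section \<open>The effects below a basic outcome probability\<close>

definition lin_form :: "nat \<Rightarrow> (nat \<Rightarrow> nat set) \<Rightarrow> (nat \<Rightarrow> nat set) \<Rightarrow> ((nat \<Rightarrow> nat) \<Rightarrow> (nat \<Rightarrow> nat) \<Rightarrow> real) \<Rightarrow> bstate \<Rightarrow> real" where
  "lin_form n ins outs R p = (\<Sum>a\<in>tuples n outs. \<Sum>x\<in>tuples n ins. p a x * R a x)"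

lemma lin_form_diff: "lin_form n ins outs R (\<lambda>a x. p a x - q a x) = lin_form n ins outs R p - lin_form n ins outs R q"
  unfolding lin_form_def by (simp add: left_diff_distrib sum_subtractf)

lemma lin_form_det_span:
  assumes "\<forall>a\<in>tuples n outs. \<forall>x\<in>tuples n ins. p a x = (\<Sum>f\<in>F. \<beta> f * det_state n f a x)"
  shows "lin_form n ins outs R p = (\<Sum>f\<in>F. \<beta> f * lin_form n ins outs R (det_state n f))"
proof -
  have "lin_form n ins outs R p = (\<Sum>a\<in>tuples n outs. \<Sum>x\<in>tuples n ins. \<Sum>f\<in>F. \<beta> f * (det_state n f a x * R a x))"
    unfolding lin_form_def using assms by (intro sum.cong refl) (simp add: sum_distrib_right mult.assoc)
  also have "\<dots> = (\<Sum>f\<in>F. \<beta> f * lin_form n ins outs R (det_state n f))"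
    unfolding lin_form_def by (simp add: sum_distrib_left sum.swap[of _ F])
  finally show ?thesis .
qed

lemma det_state_update_diff:
  assumes k: "k < n" and agree: "\<And>i. i \<noteq> k \<Longrightarrow> f i = f' i" and v: "f k \<zeta> = f' k \<zeta>"
  shows "det_state n f a x - det_state n (f(k := (f k)(\<zeta> := b))) a x
       = det_state n f' a x - det_state n (f'(k := (f' k)(\<zeta> := b))) a x"
proof -
  define A where "A = (\<forall>i<n. i \<noteq> k \<longrightarrow> a i = f i (x i))"
  have "det_state n h a x = (if A \<and> a k = h k (x k) then 1 else 0)"
    if "\<And>i. i \<noteq> k \<Longrightarrow> h i = f i \<or> h i = f' i" "\<And>i. i \<noteq> k \<Longrightarrow> f i = f' i" for h
    unfolding det_state_def A_def using that k by (auto, metis, metis)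
  then show ?thesis using agree v by auto
qed

lemma lin_form_det_state_update_eq:
  assumes f: "f \<in> det_boxes n ins outs" and f': "f' \<in> det_boxes n ins outs"
    and k: "k < n" and agree: "\<And>i. i \<noteq> k \<Longrightarrow> f i = f' i"
    and x0: "x0 k \<in> ins k" and v: "f k (x0 k) = a0 k" and v': "f' k (x0 k) = a0 k"
    and zero: "\<And>g. g \<in> det_boxes n ins outs \<Longrightarrow> g k (x0 k) \<noteq> a0 k \<Longrightarrow> lin_form n ins outs R (det_state n g) = 0"
  shows "lin_form n ins outs R (det_state n f) = lin_form n ins outs R (det_state n f')"
proof (cases "\<exists>b\<in>outs k. b \<noteq> a0 k")
  case True
  then obtain b where b: "b \<in> outs k" "b \<noteq> a0 k" by auto
  define g where "g = f(k := (f k)(x0 k := b))"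
  define g' where "g' = f'(k := (f' k)(x0 k := b))"
  have "g \<in> det_boxes n ins outs" "g' \<in> det_boxes n ins outs"
    unfolding g_def g'_def using f f' b k x0 by (auto simp: det_boxes_def PiE_def Pi_def extensional_def)
  moreover have "g k (x0 k) \<noteq> a0 k" "g' k (x0 k) \<noteq> a0 k" unfolding g_def g'_def using b by auto
  ultimately have "lin_form n ins outs R (det_state n g) = 0" "lin_form n ins outs R (det_state n g') = 0"
    using zero by blast+
  moreover have "(\<lambda>a x. det_state n f a x - det_state n g a x) = (\<lambda>a x. det_state n f' a x - det_state n g' a x)"
    unfolding g_def g'_def by (intro ext det_state_update_diff[OF k]) (use agree v v' in auto)
  then have "lin_form n ins outs R (det_state n f) - lin_form n ins outs R (det_state n g)
           = lin_form n ins outs R (det_state n f') - lin_form n ins outs R (det_state n g')"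
    unfolding lin_form_diff[symmetric] by simp
  ultimately show ?thesis by simp
next
  case False
  have "f k = f' k"
  proof
    fix \<xi> show "f k \<xi> = f' k \<xi>"
      using False det_boxes_app[OF f k] det_boxes_app[OF f' k] det_boxes_app_out[OF f k] det_boxes_app_out[OF f' k]
      by (cases "\<xi> \<in> ins k") metis+
  qed
  then have "f = f'" using agree by (metis ext)
  then show ?thesis by simp
qed

lemma lin_form_det_state_const:
  assumes f: "f \<in> det_boxes n ins outs" and f': "f' \<in> det_boxes n ins outs" and x0: "x0 \<in> tuples n ins"
    and v: "\<forall>i<n. f i (x0 i) = a0 i" and v': "\<forall>i<n. f' i (x0 i) = a0 i"
    and zero: "\<And>g. g \<in> det_boxes n ins outs \<Longrightarrow> \<not> (\<forall>i<n. g i (x0 i) = a0 i) \<Longrightarrow> lin_form n ins outs R (det_state n g) = 0"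
  shows "lin_form n ins outs R (det_state n f) = lin_form n ins outs R (det_state n f')"
proof -
  define hybrid where "hybrid k = (\<lambda>i. if i < k then f' i else f i)" for k
  have hybrid: "hybrid k \<in> det_boxes n ins outs" for k
    unfolding hybrid_def using f f' by (auto simp: det_boxes_def PiE_def Pi_def extensional_def)
  have "lin_form n ins outs R (det_state n (hybrid k)) = lin_form n ins outs R (det_state n f)" if "k \<le> n" for k
    using that
  proof (induction k)
    case (Suc k)
    have "lin_form n ins outs R (det_state n (hybrid (Suc k))) = lin_form n ins outs R (det_state n (hybrid k))"
    proof (rule lin_form_det_state_update_eq[OF hybrid hybrid])
      show "k < n" "x0 k \<in> ins k" using Suc.prems tuples_mem[OF x0] by auto
      show "hybrid (Suc k) k (x0 k) = a0 k" "hybrid k k (x0 k) = a0 k"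
        using Suc.prems v v' unfolding hybrid_def by auto
      show "\<And>i. i \<noteq> k \<Longrightarrow> hybrid (Suc k) i = hybrid k i" unfolding hybrid_def by auto
      show "\<And>g. g \<in> det_boxes n ins outs \<Longrightarrow> g k (x0 k) \<noteq> a0 k \<Longrightarrow> lin_form n ins outs R (det_state n g) = 0"
        using zero Suc.prems by (metis Suc_le_lessD)
    qed
    with Suc show ?case by simp
  qed (simp add: hybrid_def)
  moreover have "hybrid n = f'" unfolding hybrid_def using f f' by (auto simp: fun_eq_iff det_boxes_out)
  ultimately show ?thesis by (metis order_refl)
qed

definition const_box :: "nat \<Rightarrow> (nat \<Rightarrow> nat set) \<Rightarrow> (nat \<Rightarrow> nat) \<Rightarrow> nat \<Rightarrow> nat \<Rightarrow> nat" where
  "const_box n ins b = restrict (\<lambda>i. restrict (\<lambda>_. b i) (ins i)) {..<n}"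

lemma const_box_det_boxes: "b \<in> tuples n outs \<Longrightarrow> const_box n ins b \<in> det_boxes n ins outs"
  unfolding const_box_def det_boxes_def using tuples_mem by fastforce

lemma det_state_const_box:
  assumes "b \<in> tuples n outs" "a \<in> tuples n outs" "x \<in> tuples n ins"
  shows "det_state n (const_box n ins b) a x = (if a = b then 1 else 0)"
proof -
  have "(\<forall>i<n. a i = const_box n ins b i (x i)) \<longleftrightarrow> (\<forall>i<n. a i = b i)"
    unfolding const_box_def using tuples_mem[OF assms(3)] by auto
  also have "\<dots> \<longleftrightarrow> a = b" using tuples_eqI[OF assms(2,1)] by auto
  finally show ?thesis unfolding det_state_def by simp
qed

text \<open>Since deterministic states span the no-signalling states, it suffices to evaluate the effect
  on them: it vanishes on those not answering \<open>x0\<close> with \<open>a0\<close> and is constant on the others.\<close>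

theorem effect_below_entry_proportional:
  assumes fin: "\<And>i. i < n \<Longrightarrow> finite (ins i) \<and> ins i \<noteq> {} \<and> finite (outs i) \<and> outs i \<noteq> {}"
    and a0: "a0 \<in> tuples n outs" and x0: "x0 \<in> tuples n ins"
    and rep: "\<And>p. is_state n ins outs p \<Longrightarrow> \<nu> p = lin_form n ins outs R p"
    and bnd: "\<And>p. is_state n ins outs p \<Longrightarrow> 0 \<le> \<nu> p \<and> \<nu> p \<le> p a0 x0"
  shows "\<exists>c. \<forall>p. is_state n ins outs p \<longrightarrow> \<nu> p = c * p a0 x0"
proof -
  let ?F = "det_boxes n ins outs" and ?L = "lin_form n ins outs R"
  have state: "is_state n ins outs (det_state n f)" if "f \<in> ?F" for f
    using fin that by (intro det_state_is_state) auto
  have zero: "?L (det_state n f) = 0" if f: "f \<in> ?F" and "\<not> (\<forall>i<n. f i (x0 i) = a0 i)" for f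
  proof -
    have "det_state n f a0 x0 = 0" unfolding det_state_def using that(2) by auto
    then show ?thesis using bnd[OF state[OF f]] rep[OF state[OF f]] by simp
  qed
  define fs where "fs = const_box n ins a0"
  have fs: "fs \<in> ?F" unfolding fs_def by (rule const_box_det_boxes[OF a0])
  have fs_x0: "\<forall>i<n. fs i (x0 i) = a0 i" unfolding fs_def const_box_def using tuples_mem[OF x0] by auto
  define c where "c = ?L (det_state n fs)"
  have det: "?L (det_state n f) = c * det_state n f a0 x0" if f: "f \<in> ?F" for f
  proof (cases "\<forall>i<n. f i (x0 i) = a0 i")
    case True
    then have "det_state n f a0 x0 = 1" unfolding det_state_def by auto
    then show ?thesis unfolding c_def using lin_form_det_state_const[OF f fs x0 True fs_x0 zero] by simp
  next
    case False
    then show ?thesis using zero[OF f False] unfolding det_state_def by auto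
  qed
  show ?thesis
  proof (intro exI allI impI)
    fix p assume p: "is_state n ins outs p"
    obtain \<beta> where \<beta>: "\<forall>a\<in>tuples n outs. \<forall>x\<in>tuples n ins. p a x = (\<Sum>f\<in>?F. \<beta> f * det_state n f a x)"
      using no_signalling_in_det_span[OF fin state_no_signalling[OF p]] unfolding det_span_def by auto
    have "\<nu> p = (\<Sum>f\<in>?F. \<beta> f * ?L (det_state n f))" using rep[OF p] lin_form_det_span[OF \<beta>] by simp
    also have "\<dots> = c * (\<Sum>f\<in>?F. \<beta> f * det_state n f a0 x0)"
      by (simp add: det sum_distrib_left mult.left_commute)
    also have "\<dots> = c * p a0 x0" using \<beta> a0 x0 by simp
    finally show "\<nu> p = c * p a0 x0" .
  qed
qed


section \<open>Adaptive strategies and their decision trees\<close>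

lemma length_run [simp]: "length (run \<sigma> a k) = k"
  by (induction k) (auto simp: Let_def)

lemma run_Suc_snoc: "run \<sigma> a (Suc k) = run \<sigma> a k @ [(fst (\<sigma> (run \<sigma> a k)), snd (\<sigma> (run \<sigma> a k)), a (fst (\<sigma> (run \<sigma> a k))))]"
  by (simp add: Let_def)

lemma run_output: "e \<in> set (run \<sigma> a k) \<Longrightarrow> snd (snd e) = a (fst e)"
  by (induction k) (auto simp: Let_def)

lemma run_cong: "(\<And>i. i \<in> fst ` set (run \<sigma> a k) \<Longrightarrow> a' i = a i) \<Longrightarrow> run \<sigma> a' k = run \<sigma> a k"
proof (induction k)
  case (Suc k)
  then have "run \<sigma> a' k = run \<sigma> a k" by (auto simp: Let_def)
  moreover have "a' (fst (\<sigma> (run \<sigma> a k))) = a (fst (\<sigma> (run \<sigma> a k)))" using Suc.prems by (auto simp: Let_def)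
  ultimately show ?case by (simp add: Let_def)
qed simp

definition wf_history :: "nat \<Rightarrow> (nat \<Rightarrow> nat set) \<Rightarrow> (nat \<times> nat \<times> nat) list \<Rightarrow> bool" where
  "wf_history n ins h \<longleftrightarrow> distinct (map fst h) \<and> set (map fst h) \<subseteq> {..<n} \<and> (\<forall>e\<in>set h. fst (snd e) \<in> ins (fst e))"

lemma wf_history_length: "wf_history n ins h \<Longrightarrow> length h = card (fst ` set h)"
  unfolding wf_history_def by (metis distinct_card length_map set_map)

lemma wf_history_length_less:
  assumes "wf_history n ins h" "i < n" "i \<notin> fst ` set h"
  shows "length h < n"
proof -
  have "fst ` set h \<subset> {..<n}" using assms unfolding wf_history_def by auto
  then show ?thesis using wf_history_length[OF assms(1)] by (metis card_lessThan finite_lessThan psubset_card_mono)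
qed

lemma wf_history_run: "valid_strategy n ins \<sigma> \<Longrightarrow> k \<le> n \<Longrightarrow> wf_history n ins (run \<sigma> a k)"
proof (induction k)
  case (Suc k)
  then have "wf_history n ins (run \<sigma> a k)" by simp
  moreover from this have "fst (\<sigma> (run \<sigma> a k)) < n \<and> fst (\<sigma> (run \<sigma> a k)) \<notin> set (map fst (run \<sigma> a k)) \<and>
     snd (\<sigma> (run \<sigma> a k)) \<in> ins (fst (\<sigma> (run \<sigma> a k)))"
    using Suc.prems unfolding valid_strategy_def wf_history_def by auto
  ultimately show ?case unfolding wf_history_def by (auto simp: Let_def)
qed (simp add: wf_history_def)

lemma boxes_run: "valid_strategy n ins \<sigma> \<Longrightarrow> fst ` set (run \<sigma> a n) = {..<n}"
  using wf_history_run[of n ins \<sigma> n a] wf_history_length[of n ins "run \<sigma> a n"]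
  unfolding wf_history_def by (simp add: card_subset_eq)

locale box_system =
  fixes n :: nat and ins outs :: "nat \<Rightarrow> nat set"
  assumes fin: "\<And>i. i < n \<Longrightarrow> finite (ins i) \<and> ins i \<noteq> {} \<and> finite (outs i) \<and> outs i \<noteq> {}"
begin

abbreviation "outcomes \<equiv> tuples n outs"
abbreviation "settings \<equiv> tuples n ins"

lemma finite_outcomes: "finite outcomes"
  using fin by (intro finite_tuples) auto

lemma finite_settings: "finite settings"
  using fin by (intro finite_tuples) auto

lemma outcomes_nonempty: "outcomes \<noteq> {}"
  using fin by (intro tuples_nonempty) auto

lemma settings_nonempty: "settings \<noteq> {}"
  using fin by (intro tuples_nonempty) auto

definition moves :: "(nat \<times> nat \<times> nat) list \<Rightarrow> (nat \<times> nat) set" where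
  "moves h = {(i, \<xi>). i < n \<and> i \<notin> fst ` set h \<and> \<xi> \<in> ins i}"

lemma finite_moves: "finite (moves h)"
proof -
  have "moves h \<subseteq> Sigma {..<n} ins" unfolding moves_def by auto
  moreover have "finite (Sigma {..<n} ins)" using fin by (intro finite_SigmaI) auto
  ultimately show ?thesis by (rule finite_subset)
qed

lemma moves_nonempty: "distinct (map fst h) \<Longrightarrow> set (map fst h) \<subseteq> {..<n} \<Longrightarrow> length h < n \<Longrightarrow> moves h \<noteq> {}"
proof -
  assume h: "distinct (map fst h)" "set (map fst h) \<subseteq> {..<n}" "length h < n"
  then have "card (fst ` set h) < n" by (metis distinct_card length_map set_map)
  then have "fst ` set h \<noteq> {..<n}" by auto
  then obtain i where "i < n" "i \<notin> fst ` set h" using h(2) by auto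
  moreover obtain \<xi> where "\<xi> \<in> ins i" using fin \<open>i < n\<close> by auto
  ultimately show ?thesis unfolding moves_def by auto
qed

lemma valid_strategy_move:
  "valid_strategy n ins \<sigma> \<Longrightarrow> wf_history n ins h \<Longrightarrow> length h < n \<Longrightarrow> \<sigma> h \<in> moves h"
  unfolding valid_strategy_def wf_history_def moves_def by (auto simp: case_prod_beta)

lemma inputs_of_settings: "valid_strategy n ins \<sigma> \<Longrightarrow> inputs_of n \<sigma> a \<in> settings"
proof -
  assume \<sigma>: "valid_strategy n ins \<sigma>"
  have "fst (snd (hd (filter (\<lambda>e. fst e = i) (run \<sigma> a n)))) \<in> ins i" if "i < n" for i
  proof -
    have "i \<in> fst ` set (run \<sigma> a n)" using boxes_run[OF \<sigma>] that by simp
    then have "filter (\<lambda>e. fst e = i) (run \<sigma> a n) \<noteq> []" by (auto simp: filter_empty_conv)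
    then have "hd (filter (\<lambda>e. fst e = i) (run \<sigma> a n)) \<in> set (filter (\<lambda>e. fst e = i) (run \<sigma> a n))"
      by (rule hd_in_set)
    then show ?thesis using wf_history_run[OF \<sigma>, of n a] unfolding wf_history_def by auto
  qed
  then show ?thesis unfolding inputs_of_def tuples_def by auto
qed

definition consistent :: "(nat \<Rightarrow> nat) \<Rightarrow> (nat \<times> nat \<times> nat) list \<Rightarrow> bool" where
  "consistent a h \<longleftrightarrow> (\<forall>e\<in>set h. a (fst e) = snd (snd e))"

definition hist_inputs :: "(nat \<times> nat \<times> nat) list \<Rightarrow> nat \<Rightarrow> nat" where
  "hist_inputs h = restrict (\<lambda>i. if i \<in> fst ` set h then fst (snd (hd (filter (\<lambda>e. fst e = i) h)))
                                 else (SOME \<xi>. \<xi> \<in> ins i)) {..<n}"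

text \<open>The inputs of unmeasured boxes are completed arbitrarily; by no-signalling this does not
  affect the probability of the history (\<open>hist_prob_children\<close>).\<close>

definition hist_prob :: "bstate \<Rightarrow> (nat \<times> nat \<times> nat) list \<Rightarrow> real" where
  "hist_prob p h = (\<Sum>a\<in>{a\<in>outcomes. consistent a h}. p a (hist_inputs h))"

lemma hist_inputs_settings: "wf_history n ins h \<Longrightarrow> hist_inputs h \<in> settings"
proof -
  assume h: "wf_history n ins h"
  have "(if i \<in> fst ` set h then fst (snd (hd (filter (\<lambda>e. fst e = i) h))) else (SOME \<xi>. \<xi> \<in> ins i)) \<in> ins i"
    if i: "i < n" for i
  proof (cases "i \<in> fst ` set h")
    case True
    then have "filter (\<lambda>e. fst e = i) h \<noteq> []" by (auto simp: filter_empty_conv)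
    then have "hd (filter (\<lambda>e. fst e = i) h) \<in> set (filter (\<lambda>e. fst e = i) h)" by (rule hd_in_set)
    then show ?thesis using h True unfolding wf_history_def by auto
  next
    case False
    then show ?thesis using fin[OF i] by (auto intro: someI_ex)
  qed
  then show ?thesis unfolding hist_inputs_def tuples_def by auto
qed

lemma hist_inputs_snoc: "i \<notin> fst ` set h \<Longrightarrow> i < n \<Longrightarrow> hist_inputs (h @ [(i, \<xi>, \<alpha>)]) = (hist_inputs h)(i := \<xi>)"
proof -
  assume "i \<notin> fst ` set h" "i < n"
  moreover from this have "filter (\<lambda>e. fst e = i) h = []" by (auto simp: filter_empty_conv)
  ultimately show ?thesis unfolding hist_inputs_def by (auto simp: fun_eq_iff)
qed

lemma no_signalling_sum_cong:
  assumes p: "is_state n ins outs p" and i: "i < n" and A: "A \<subseteq> outcomes"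
    and closed: "\<And>a c. a \<in> A \<Longrightarrow> c \<in> outs i \<Longrightarrow> a(i := c) \<in> A"
    and x: "x \<in> settings" and \<xi>: "\<xi> \<in> ins i"
  shows "(\<Sum>a\<in>A. p a x) = (\<Sum>a\<in>A. p a (x(i := \<xi>)))"
proof -
  have ai: "a i \<in> outs i" if "a \<in> A" for a using A that tuples_mem[OF _ i] by blast
  have sum_upd: "(\<Sum>a\<in>A. \<Sum>c\<in>outs i. g (a(i := c))) = real (card (outs i)) * (\<Sum>a\<in>A. g a)"
    for g :: "(nat \<Rightarrow> nat) \<Rightarrow> real"
  proof -
    have bij: "bij_betw (\<lambda>(a, c). (a(i := c), a i)) (A \<times> outs i) (A \<times> outs i)"
      by (rule bij_betw_byWitness[where f'="\<lambda>(a, c). (a(i := c), a i)"]) (auto simp: closed ai)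
    have "(\<Sum>a\<in>A. \<Sum>c\<in>outs i. g (a(i := c))) = (\<Sum>(a, c)\<in>A \<times> outs i. g (a(i := c)))"
      by (simp add: sum.cartesian_product)
    also have "\<dots> = (\<Sum>(a, c)\<in>A \<times> outs i. g a)"
      using sum.reindex_bij_betw[OF bij, of "\<lambda>(a, c). g a"] by (simp add: case_prod_beta)
    also have "\<dots> = real (card (outs i)) * (\<Sum>a\<in>A. g a)"
      by (simp add: sum.cartesian_product[symmetric] sum_distrib_left)
    finally show ?thesis .
  qed
  have "(\<Sum>a\<in>A. \<Sum>c\<in>outs i. p (a(i := c)) x) = (\<Sum>a\<in>A. \<Sum>c\<in>outs i. p (a(i := c)) (x(i := \<xi>)))"
  proof (rule sum.cong[OF refl])
    fix a assume "a \<in> A"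
    with A have "a \<in> outcomes" by auto
    with p i x \<xi> show "(\<Sum>c\<in>outs i. p (a(i := c)) x) = (\<Sum>c\<in>outs i. p (a(i := c)) (x(i := \<xi>)))"
      unfolding is_state_def by blast
  qed
  then have "real (card (outs i)) * (\<Sum>a\<in>A. p a x) = real (card (outs i)) * (\<Sum>a\<in>A. p a (x(i := \<xi>)))"
    using sum_upd[of "\<lambda>a. p a x"] sum_upd[of "\<lambda>a. p a (x(i := \<xi>))"] by simp
  moreover have "card (outs i) \<noteq> 0" using fin[OF i] by simp
  ultimately show ?thesis by simp
qed

lemma hist_prob_Nil: "is_state n ins outs p \<Longrightarrow> hist_prob p [] = 1"
  unfolding hist_prob_def consistent_def using hist_inputs_settings[of "[]"]
  unfolding is_state_def wf_history_def by auto

lemma hist_prob_nonneg: "is_state n ins outs p \<Longrightarrow> wf_history n ins h \<Longrightarrow> 0 \<le> hist_prob p h"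
  unfolding hist_prob_def is_state_def using hist_inputs_settings by (auto intro!: sum_nonneg)

lemma hist_prob_children:
  assumes p: "is_state n ins outs p" and h: "wf_history n ins h" and move: "(i, \<xi>) \<in> moves h"
  shows "(\<Sum>\<alpha>\<in>outs i. hist_prob p (h @ [(i, \<xi>, \<alpha>)])) = hist_prob p h"
proof -
  let ?A = "{a\<in>outcomes. consistent a h}"
  have i: "i < n" "i \<notin> fst ` set h" and \<xi>: "\<xi> \<in> ins i" using move unfolding moves_def by auto
  have "(\<Sum>\<alpha>\<in>outs i. hist_prob p (h @ [(i, \<xi>, \<alpha>)])) = (\<Sum>\<alpha>\<in>outs i. \<Sum>a\<in>{a\<in>?A. a i = \<alpha>}. p a ((hist_inputs h)(i := \<xi>)))"
    unfolding hist_prob_def hist_inputs_snoc[OF i(2,1)] consistent_def by (intro sum.cong refl) auto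
  also have "\<dots> = (\<Sum>a\<in>?A. p a ((hist_inputs h)(i := \<xi>)))"
    by (rule sum.group) (use finite_outcomes fin[OF i(1)] tuples_mem[OF _ i(1)] in auto)
  also have "\<dots> = (\<Sum>a\<in>?A. p a (((hist_inputs h)(i := \<xi>))(i := hist_inputs h i)))"
  proof (rule no_signalling_sum_cong[OF p i(1)])
    show "\<And>a c. a \<in> ?A \<Longrightarrow> c \<in> outs i \<Longrightarrow> a(i := c) \<in> ?A"
      using i by (auto simp: consistent_def tuples_upd)
    show "(hist_inputs h)(i := \<xi>) \<in> settings" using hist_inputs_settings[OF h] i \<xi> tuples_upd by blast
    show "hist_inputs h i \<in> ins i" using tuples_mem[OF hist_inputs_settings[OF h] i(1)] .
  qed auto
  also have "\<dots> = hist_prob p h" unfolding hist_prob_def by simp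
  finally show ?thesis .
qed

lemma consistent_run: "consistent a (run \<sigma> a k)"
  unfolding consistent_def using run_output by metis

lemma consistent_unique:
  assumes "fst ` set h = {..<n}" "a \<in> outcomes" "a' \<in> outcomes" "consistent a h" "consistent a' h"
  shows "a' = a"
proof (rule tuples_eqI[OF assms(3,2)])
  fix i assume "i < n"
  then obtain e where "e \<in> set h" "fst e = i" using assms(1) by (metis imageE lessThan_iff)
  then show "a' i = a i" using assms(4,5) unfolding consistent_def by metis
qed

lemma hist_prob_complete:
  assumes "fst ` set h = {..<n}" "a \<in> outcomes" "consistent a h"
  shows "hist_prob p h = p a (hist_inputs h)"
proof -
  have "{a'\<in>outcomes. consistent a' h} = {a}"
    using consistent_unique[OF assms(1,2) _ assms(3)] assms(2,3) by blast
  then show ?thesis unfolding hist_prob_def by simp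
qed

lemma inputs_of_hist_inputs: "valid_strategy n ins \<sigma> \<Longrightarrow> inputs_of n \<sigma> a = hist_inputs (run \<sigma> a n)"
  unfolding inputs_of_def hist_inputs_def using boxes_run by (auto simp: fun_eq_iff)

lemma hist_prob_run:
  "valid_strategy n ins \<sigma> \<Longrightarrow> a \<in> outcomes \<Longrightarrow> hist_prob p (run \<sigma> a n) = p a (inputs_of n \<sigma> a)"
  using hist_prob_complete[OF boxes_run _ consistent_run] by (simp add: inputs_of_hist_inputs)

definition subtree_sum :: "strategy \<Rightarrow> ((nat \<Rightarrow> nat) \<Rightarrow> real) \<Rightarrow> (nat \<times> nat \<times> nat) list \<Rightarrow> real" where
  "subtree_sum \<sigma> F h = (\<Sum>a\<in>{a\<in>outcomes. run \<sigma> a (length h) = h}. F a)"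

lemma subtree_sum_children:
  assumes "(i, \<xi>) \<in> moves h" and "\<sigma> h = (i, \<xi>)"
  shows "subtree_sum \<sigma> F h = (\<Sum>\<alpha>\<in>outs i. subtree_sum \<sigma> F (h @ [(i, \<xi>, \<alpha>)]))"
proof -
  have i: "i < n" using assms(1) unfolding moves_def by auto
  have "{a\<in>outcomes. run \<sigma> a (length (h @ [(i, \<xi>, \<alpha>)])) = h @ [(i, \<xi>, \<alpha>)]}
      = {a\<in>{a\<in>outcomes. run \<sigma> a (length h) = h}. a i = \<alpha>}" for \<alpha>
    using assms(2) by (auto simp: Let_def)
  then show ?thesis unfolding subtree_sum_def
    by (simp only:) (rule sum.group[symmetric], use finite_outcomes fin[OF i] tuples_mem[OF _ i] in auto)
qed

lemma run_snoc_upd: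
  assumes \<sigma>: "valid_strategy n ins \<sigma>" and a: "a \<in> outcomes" and k: "k < n"
    and s: "\<sigma> (run \<sigma> a k) = (i, \<xi>)" and \<alpha>: "\<alpha> \<in> outs i"
  shows "run \<sigma> a k @ [(i, \<xi>, \<alpha>)] = run \<sigma> (a(i := \<alpha>)) (Suc k)" and "a(i := \<alpha>) \<in> outcomes"
proof -
  have "(i, \<xi>) \<in> moves (run \<sigma> a k)"
    using valid_strategy_move[OF \<sigma> wf_history_run[OF \<sigma>], of k a] k s by simp
  then have i: "i < n" "i \<notin> fst ` set (run \<sigma> a k)" unfolding moves_def by auto
  then have r: "run \<sigma> (a(i := \<alpha>)) k = run \<sigma> a k" by (intro run_cong) auto
  show "run \<sigma> a k @ [(i, \<xi>, \<alpha>)] = run \<sigma> (a(i := \<alpha>)) (Suc k)"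
    unfolding run_Suc_snoc r s by simp
  show "a(i := \<alpha>) \<in> outcomes" using tuples_upd a i \<alpha> by blast
qed

lemma subtree_sum_run:
  assumes \<sigma>: "valid_strategy n ins \<sigma>" and a: "a \<in> outcomes"
  shows "subtree_sum \<sigma> F (run \<sigma> a n) = F a"
proof -
  have "{a'\<in>outcomes. run \<sigma> a' n = run \<sigma> a n} = {a}"
  proof safe
    fix a' assume "a' \<in> outcomes" "run \<sigma> a' n = run \<sigma> a n"
    then show "a' = a"
      using consistent_unique[OF boxes_run[OF \<sigma>] a, of a'] consistent_run[of a \<sigma> n] consistent_run[of a' \<sigma> n]
      by simp
  qed (use a in auto)
  then show ?thesis unfolding subtree_sum_def by simp
qed

theorem backward_induction:
  fixes V :: "(nat \<times> nat \<times> nat) list \<Rightarrow> real" and F :: "(nat \<Rightarrow> nat) \<Rightarrow> real"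
  assumes \<sigma>: "valid_strategy n ins \<sigma>"
    and leaf: "\<And>a. a \<in> outcomes \<Longrightarrow> V (run \<sigma> a n) \<le> F a"
    and step: "\<And>h. wf_history n ins h \<Longrightarrow> length h < n \<Longrightarrow>
                  V h \<le> (\<Sum>\<alpha>\<in>outs (fst (\<sigma> h)). V (h @ [(fst (\<sigma> h), snd (\<sigma> h), \<alpha>)]))"
  shows "V [] \<le> (\<Sum>a\<in>outcomes. F a)"
proof -
  have "V (run \<sigma> a (n - d)) \<le> subtree_sum \<sigma> F (run \<sigma> a (n - d))" if "d \<le> n" "a \<in> outcomes" for d a
    using that
  proof (induction d arbitrary: a)
    case 0
    then show ?case using leaf subtree_sum_run[OF \<sigma>] by simp
  next
    case (Suc d)
    define h where "h = run \<sigma> a (n - Suc d)"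
    obtain i \<xi> where s: "\<sigma> h = (i, \<xi>)" by fastforce
    have h: "wf_history n ins h" "length h < n" using Suc.prems wf_history_run[OF \<sigma>] unfolding h_def by auto
    have "V h \<le> (\<Sum>\<alpha>\<in>outs i. V (h @ [(i, \<xi>, \<alpha>)]))" using step[OF h] s by simp
    also have "\<dots> \<le> (\<Sum>\<alpha>\<in>outs i. subtree_sum \<sigma> F (h @ [(i, \<xi>, \<alpha>)]))"
    proof (rule sum_mono)
      fix \<alpha> assume "\<alpha> \<in> outs i"
      with run_snoc_upd[OF \<sigma> Suc.prems(2) _ s[unfolded h_def]] Suc.prems
      have "h @ [(i, \<xi>, \<alpha>)] = run \<sigma> (a(i := \<alpha>)) (n - d)" "a(i := \<alpha>) \<in> outcomes"
        unfolding h_def by (auto simp: Suc_diff_Suc)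
      then show "V (h @ [(i, \<xi>, \<alpha>)]) \<le> subtree_sum \<sigma> F (h @ [(i, \<xi>, \<alpha>)])"
        using Suc.IH Suc.prems by simp
    qed
    also have "\<dots> = subtree_sum \<sigma> F h"
      using subtree_sum_children[of i \<xi> h \<sigma> F] valid_strategy_move[OF \<sigma> h] s by simp
    finally show ?case unfolding h_def .
  qed
  moreover obtain a where "a \<in> outcomes" using outcomes_nonempty by auto
  ultimately have "V (run \<sigma> a 0) \<le> subtree_sum \<sigma> F (run \<sigma> a 0)" by (metis diff_self_eq_0 order_refl)
  then show ?thesis unfolding subtree_sum_def by simp
qed

corollary backward_induction_eq:
  fixes V :: "(nat \<times> nat \<times> nat) list \<Rightarrow> real" and F :: "(nat \<Rightarrow> nat) \<Rightarrow> real"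
  assumes "valid_strategy n ins \<sigma>"
    and "\<And>a. a \<in> outcomes \<Longrightarrow> V (run \<sigma> a n) = F a"
    and "\<And>h. wf_history n ins h \<Longrightarrow> length h < n \<Longrightarrow>
                  V h = (\<Sum>\<alpha>\<in>outs (fst (\<sigma> h)). V (h @ [(fst (\<sigma> h), snd (\<sigma> h), \<alpha>)]))"
  shows "V [] = (\<Sum>a\<in>outcomes. F a)"
proof -
  have "V [] \<le> (\<Sum>a\<in>outcomes. F a)"
    using assms by (intro backward_induction) auto
  moreover have "- V [] \<le> (\<Sum>a\<in>outcomes. - F a)"
    using assms by (intro backward_induction[where V="\<lambda>h. - V h"]) (auto simp: sum_negf)
  ultimately show ?thesis by (simp add: sum_negf)
qed

lemma basic_prob_sum:
  assumes \<sigma>: "valid_strategy n ins \<sigma>" and p: "is_state n ins outs p"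
  shows "(\<Sum>a\<in>outcomes. p a (inputs_of n \<sigma> a)) = 1"
proof -
  have "hist_prob p [] = (\<Sum>a\<in>outcomes. p a (inputs_of n \<sigma> a))"
    using hist_prob_run[OF \<sigma>] hist_prob_children[OF p] valid_strategy_move[OF \<sigma>]
    by (intro backward_induction_eq[OF \<sigma>]) (auto simp: case_prod_beta)
  then show ?thesis using hist_prob_Nil[OF p] by simp
qed

end


section \<open>Optimal strategies by dynamic programming\<close>

definition entropy_term :: "real \<Rightarrow> real" where
  "entropy_term t = (if t = 0 then 0 else - (t * log 2 t))"

lemma entropy_term_mult:
  "0 \<le> u \<Longrightarrow> 0 \<le> v \<Longrightarrow> entropy_term (u * v) = v * entropy_term u + u * entropy_term v"
  unfolding entropy_term_def by (auto simp: log_mult algebra_simps)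

context box_system
begin

text \<open>\<open>opt_value p k h\<close> is the least entropy contribution the remaining \<open>k\<close> measurements can achieve
  below history \<open>h\<close>; it is only meaningful for \<open>k = n - length h\<close> (otherwise \<open>Min\<close> may range over
  the empty set).\<close>

primrec opt_value :: "bstate \<Rightarrow> nat \<Rightarrow> (nat \<times> nat \<times> nat) list \<Rightarrow> real" where
  "opt_value p 0 h = entropy_term (hist_prob p h)"
| "opt_value p (Suc k) h = Min ((\<lambda>(i, \<xi>). \<Sum>\<alpha>\<in>outs i. opt_value p k (h @ [(i, \<xi>, \<alpha>)])) ` moves h)"

lemma opt_value_le:
  "(i, \<xi>) \<in> moves h \<Longrightarrow> opt_value p (Suc k) h \<le> (\<Sum>\<alpha>\<in>outs i. opt_value p k (h @ [(i, \<xi>, \<alpha>)]))"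
  using finite_moves by (force intro: Min_le)

definition opt_strategy :: "bstate \<Rightarrow> strategy" where
  "opt_strategy p h = (SOME m. m \<in> moves h \<and>
     (\<Sum>\<alpha>\<in>outs (fst m). opt_value p (n - Suc (length h)) (h @ [(fst m, snd m, \<alpha>)])) = opt_value p (n - length h) h)"

lemma opt_strategy:
  assumes "distinct (map fst h)" "set (map fst h) \<subseteq> {..<n}" "length h < n"
  shows "opt_strategy p h \<in> moves h \<and>
     (\<Sum>\<alpha>\<in>outs (fst (opt_strategy p h)). opt_value p (n - Suc (length h)) (h @ [(fst (opt_strategy p h), snd (opt_strategy p h), \<alpha>)]))
       = opt_value p (n - length h) h"
proof -
  have "n - length h = Suc (n - Suc (length h))" using assms(3) by simp
  then have "opt_value p (n - length h) h
      \<in> (\<lambda>(i, \<xi>). \<Sum>\<alpha>\<in>outs i. opt_value p (n - Suc (length h)) (h @ [(i, \<xi>, \<alpha>)])) ` moves h"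
    using finite_moves moves_nonempty[OF assms] by (simp del: Suc_diff_Suc)
  then obtain i \<xi> where "(i, \<xi>) \<in> moves h"
    "opt_value p (n - length h) h = (\<Sum>\<alpha>\<in>outs i. opt_value p (n - Suc (length h)) (h @ [(i, \<xi>, \<alpha>)]))"
    by auto
  then have "\<exists>m. m \<in> moves h \<and>
      (\<Sum>\<alpha>\<in>outs (fst m). opt_value p (n - Suc (length h)) (h @ [(fst m, snd m, \<alpha>)])) = opt_value p (n - length h) h"
    by (intro exI[of _ "(i, \<xi>)"]) simp
  then show ?thesis unfolding opt_strategy_def by (rule someI_ex)
qed

lemma valid_opt_strategy: "valid_strategy n ins (opt_strategy p)"
  unfolding valid_strategy_def
proof (intro allI impI)
  fix h :: "(nat \<times> nat \<times> nat) list" assume "distinct (map fst h) \<and> set (map fst h) \<subseteq> {..<n} \<and> length h < n"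
  then have "opt_strategy p h \<in> moves h" using opt_strategy by blast
  then show "fst (opt_strategy p h) < n \<and> fst (opt_strategy p h) \<notin> set (map fst h) \<and>
      snd (opt_strategy p h) \<in> ins (fst (opt_strategy p h))"
    unfolding moves_def by force
qed

definition strategy_entropy :: "strategy \<Rightarrow> bstate \<Rightarrow> real" where
  "strategy_entropy \<sigma> p = (\<Sum>a\<in>outcomes. entropy_term (p a (inputs_of n \<sigma> a)))"

lemma strategy_entropy_cong:
  "valid_strategy n ins \<sigma> \<Longrightarrow> (\<And>a x. a \<in> outcomes \<Longrightarrow> x \<in> settings \<Longrightarrow> p a x = q a x)
   \<Longrightarrow> strategy_entropy \<sigma> p = strategy_entropy \<sigma> q"
  unfolding strategy_entropy_def using inputs_of_settings by (intro sum.cong) auto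

lemma opt_value_le_strategy_entropy:
  assumes \<sigma>: "valid_strategy n ins \<sigma>"
  shows "opt_value p n [] \<le> strategy_entropy \<sigma> p"
proof -
  have "opt_value p (n - length ([] :: (nat \<times> nat \<times> nat) list)) [] \<le> strategy_entropy \<sigma> p"
    unfolding strategy_entropy_def
  proof (rule backward_induction[OF \<sigma>, where V="\<lambda>h. opt_value p (n - length h) h"])
    fix h :: "(nat \<times> nat \<times> nat) list" assume h: "wf_history n ins h" "length h < n"
    obtain i \<xi> where s: "\<sigma> h = (i, \<xi>)" by fastforce
    with valid_strategy_move[OF \<sigma> h] have "(i, \<xi>) \<in> moves h" by simp
    then have "opt_value p (Suc (n - Suc (length h))) h \<le> (\<Sum>\<alpha>\<in>outs i. opt_value p (n - Suc (length h)) (h @ [(i, \<xi>, \<alpha>)]))"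
      by (rule opt_value_le)
    then show "opt_value p (n - length h) h \<le>
        (\<Sum>\<alpha>\<in>outs (fst (\<sigma> h)). opt_value p (n - length (h @ [(fst (\<sigma> h), snd (\<sigma> h), \<alpha>)]))
                                             (h @ [(fst (\<sigma> h), snd (\<sigma> h), \<alpha>)]))"
      using h(2) s by (simp add: Suc_diff_Suc)
  qed (simp add: hist_prob_run[OF \<sigma>])
  then show ?thesis by simp
qed

lemma strategy_entropy_opt_strategy: "strategy_entropy (opt_strategy p) p = opt_value p n []"
proof -
  have "opt_value p (n - length ([] :: (nat \<times> nat \<times> nat) list)) [] = strategy_entropy (opt_strategy p) p"
    unfolding strategy_entropy_def
  proof (rule backward_induction_eq[OF valid_opt_strategy, where V="\<lambda>h. opt_value p (n - length h) h"])
    fix h :: "(nat \<times> nat \<times> nat) list" assume "wf_history n ins h" "length h < n"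
    then show "opt_value p (n - length h) h =
        (\<Sum>\<alpha>\<in>outs (fst (opt_strategy p h)). opt_value p (n - length (h @ [(fst (opt_strategy p h), snd (opt_strategy p h), \<alpha>)]))
                                       (h @ [(fst (opt_strategy p h), snd (opt_strategy p h), \<alpha>)]))"
      using opt_strategy[of h p] unfolding wf_history_def by simp
  qed (simp add: hist_prob_run[OF valid_opt_strategy])
  then show ?thesis by simp
qed

end


section \<open>Maximally informative basic measurements\<close>

context box_system
begin

lemma inj_on_fiber: "inj_on r outcomes \<Longrightarrow> a \<in> outcomes \<Longrightarrow> {a'\<in>outcomes. r a' = r a} = {a}"
  by (auto simp: inj_on_def)

lemma basic_meas_inj_apply:
  "inj_on g outcomes \<Longrightarrow> a \<in> outcomes \<Longrightarrow> snd (basic_meas n outs \<sigma> g) (g a) p = p a (inputs_of n \<sigma> a)"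
  unfolding basic_meas_def snd_conv by (simp add: inj_on_fiber)

lemma basic_meas_is_measurement:
  assumes \<sigma>: "valid_strategy n ins \<sigma>"
  shows "is_measurement n ins outs (basic_meas n outs \<sigma> r)"
  unfolding is_measurement_def basic_meas_def fst_conv snd_conv
proof (intro conjI ballI allI impI)
  show "finite (r ` outcomes)" using finite_outcomes by simp
next
  fix k assume k: "k \<in> r ` outcomes"
  define R where "R a x = (if r a = k \<and> x = inputs_of n \<sigma> a then 1 else 0 :: real)" for a x
  show "is_effect n ins outs (\<lambda>p. \<Sum>a\<in>{a\<in>outcomes. r a = k}. p a (inputs_of n \<sigma> a))"
    unfolding is_effect_def
  proof (intro conjI exI[of _ R] allI impI)
    fix p :: bstate
    have "(\<Sum>x\<in>settings. p a x * R a x) = (if r a = k then p a (inputs_of n \<sigma> a) else 0)" if "a \<in> outcomes" for a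
    proof -
      have "(\<Sum>x\<in>settings. p a x * R a x) = (\<Sum>x\<in>settings. if x = inputs_of n \<sigma> a then (if r a = k then p a x else 0) else 0)"
        unfolding R_def by (rule sum.cong) auto
      then show ?thesis using inputs_of_settings[OF \<sigma>] finite_settings by (simp add: sum.delta')
    qed
    then show "(\<Sum>a\<in>{a\<in>outcomes. r a = k}. p a (inputs_of n \<sigma> a)) = (\<Sum>a\<in>outcomes. \<Sum>x\<in>settings. p a x * R a x)"
      using finite_outcomes by (simp add: sum.inter_filter)
  next
    fix p assume p: "is_state n ins outs p"
    have nonneg: "0 \<le> p a (inputs_of n \<sigma> a)" if "a \<in> outcomes" for a
      using p inputs_of_settings[OF \<sigma>] that unfolding is_state_def by blast
    then show "0 \<le> (\<Sum>a\<in>{a\<in>outcomes. r a = k}. p a (inputs_of n \<sigma> a))" by (intro sum_nonneg) auto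
    have "(\<Sum>a\<in>{a\<in>outcomes. r a = k}. p a (inputs_of n \<sigma> a)) \<le> (\<Sum>a\<in>outcomes. p a (inputs_of n \<sigma> a))"
      using nonneg finite_outcomes by (intro sum_mono2) auto
    then show "(\<Sum>a\<in>{a\<in>outcomes. r a = k}. p a (inputs_of n \<sigma> a)) \<le> 1" using basic_prob_sum[OF \<sigma> p] by simp
  qed
next
  fix p assume p: "is_state n ins outs p"
  have "(\<Sum>k\<in>r ` outcomes. \<Sum>a\<in>{a\<in>outcomes. r a = k}. p a (inputs_of n \<sigma> a)) = (\<Sum>a\<in>outcomes. p a (inputs_of n \<sigma> a))"
    by (rule sum.group) (use finite_outcomes in auto)
  then show "(\<Sum>k\<in>r ` outcomes. \<Sum>a\<in>{a\<in>outcomes. r a = k}. p a (inputs_of n \<sigma> a)) = 1"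
    using basic_prob_sum[OF \<sigma> p] by simp
qed

text \<open>Every effect of a refinement lies below a single outcome probability, hence is proportional to it.\<close>

lemma inj_basic_meas_max_informative:
  assumes \<sigma>: "valid_strategy n ins \<sigma>" and inj: "inj_on r outcomes"
  shows "max_informative n ins outs (basic_meas n outs \<sigma> r)"
  unfolding max_informative_def
proof (intro conjI allI impI)
  let ?M = "basic_meas n outs \<sigma> r"
  show "is_measurement n ins outs ?M" by (rule basic_meas_is_measurement[OF \<sigma>])
  fix N f assume Nf: "is_measurement n ins outs N \<and> refinement_via n ins outs N ?M f"
  show "trivial_via n ins outs N ?M f"
    unfolding trivial_via_def
  proof
    fix s assume s: "s \<in> fst N"
    have "f s \<in> r ` outcomes" using Nf s unfolding refinement_via_def basic_meas_def by auto
    then obtain a0 where a0: "a0 \<in> outcomes" and fs: "f s = r a0" by auto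
    have M_fs: "snd ?M (f s) p = p a0 (inputs_of n \<sigma> a0)" for p
      using basic_meas_inj_apply[OF inj a0] fs by simp
    have effects: "\<And>s'. s' \<in> fst N \<Longrightarrow> is_effect n ins outs (snd N s')" and "finite (fst N)"
      using Nf unfolding is_measurement_def by auto
    obtain R where R: "\<And>p. is_state n ins outs p \<Longrightarrow> snd N s p = lin_form n ins outs R p"
      using effects[OF s] unfolding is_effect_def lin_form_def by auto
    have "0 \<le> snd N s p \<and> snd N s p \<le> p a0 (inputs_of n \<sigma> a0)" if p: "is_state n ins outs p" for p
    proof
      show "0 \<le> snd N s p" using effects[OF s] p unfolding is_effect_def by auto
      have "snd N s p \<le> (\<Sum>s'\<in>{s'\<in>fst N. f s' = f s}. snd N s' p)"
        using \<open>finite (fst N)\<close> s effects p unfolding is_effect_def by (intro member_le_sum) auto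
      also have "\<dots> = snd ?M (f s) p"
        using Nf \<open>f s \<in> r ` outcomes\<close> p unfolding refinement_via_def basic_meas_def by auto
      finally show "snd N s p \<le> p a0 (inputs_of n \<sigma> a0)" unfolding M_fs .
    qed
    then obtain c where "\<forall>p. is_state n ins outs p \<longrightarrow> snd N s p = c * p a0 (inputs_of n \<sigma> a0)"
      using effect_below_entry_proportional[OF fin a0 inputs_of_settings[OF \<sigma>] R] by blast
    then show "\<exists>c. \<forall>p. is_state n ins outs p \<longrightarrow> snd N s p = c * snd ?M (f s) p"
      unfolding M_fs by blast
  qed
qed

lemma refinement_via_inj_basic_meas:
  assumes g: "inj_on g outcomes"
  shows "refinement_via n ins outs (basic_meas n outs \<sigma> g) (basic_meas n outs \<sigma> r) (\<lambda>s. r (inv_into outcomes g s))"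
  unfolding refinement_via_def
proof (intro conjI ballI allI impI)
  let ?M = "basic_meas n outs \<sigma> r" and ?N = "basic_meas n outs \<sigma> g" and ?f = "\<lambda>s. r (inv_into outcomes g s)"
  fix s assume "s \<in> fst ?N"
  then show "?f s \<in> fst ?M" unfolding basic_meas_def by (auto simp: inv_into_f_f[OF g])
next
  let ?M = "basic_meas n outs \<sigma> r" and ?N = "basic_meas n outs \<sigma> g" and ?f = "\<lambda>s. r (inv_into outcomes g s)"
  fix k p
  have "{s\<in>fst ?N. ?f s = k} = g ` {a\<in>outcomes. r a = k}"
    unfolding basic_meas_def by (auto simp: inv_into_f_f[OF g])
  moreover have "inj_on g {a\<in>outcomes. r a = k}" using g by (rule inj_on_subset) auto
  ultimately have "(\<Sum>s\<in>{s\<in>fst ?N. ?f s = k}. snd ?N s p) = (\<Sum>a\<in>{a\<in>outcomes. r a = k}. snd ?N (g a) p)"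
    by (simp add: sum.reindex)
  also have "\<dots> = snd ?M k p"
    by (simp add: basic_meas_inj_apply[OF g]) (simp add: basic_meas_def)
  finally show "snd ?M k p = (\<Sum>s\<in>{s\<in>fst ?N. ?f s = k}. snd ?N s p)" by simp
qed

text \<open>If \<open>r\<close> identifies two outcomes \<open>a1 \<noteq> a2\<close>, splitting them is a refinement that is
  not trivial: the deterministic states answering \<open>a1\<close> resp. \<open>a2\<close> would force the proportionality
  constant to be both \<open>1\<close> and \<open>0\<close>.\<close>

lemma max_informative_basic_meas_inj:
  assumes \<sigma>: "valid_strategy n ins \<sigma>" and mi: "max_informative n ins outs (basic_meas n outs \<sigma> r)"
  shows "inj_on r outcomes"
proof (rule ccontr)
  assume "\<not> inj_on r outcomes"
  then obtain a1 a2 where a: "a1 \<in> outcomes" "a2 \<in> outcomes" "a1 \<noteq> a2" "r a1 = r a2" unfolding inj_on_def by auto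
  obtain g :: "(nat \<Rightarrow> nat) \<Rightarrow> nat" where g: "inj_on g outcomes"
    using finite_imp_inj_to_nat_seg[OF finite_outcomes] by blast
  let ?M = "basic_meas n outs \<sigma> r" and ?N = "basic_meas n outs \<sigma> g"
  have "trivial_via n ins outs ?N ?M (\<lambda>s. r (inv_into outcomes g s))"
    using mi basic_meas_is_measurement[OF \<sigma>] refinement_via_inj_basic_meas[OF g] unfolding max_informative_def by blast
  moreover have "g a1 \<in> fst ?N" unfolding basic_meas_def using a(1) by simp
  ultimately obtain c where "\<forall>p. is_state n ins outs p \<longrightarrow> snd ?N (g a1) p = c * snd ?M (r (inv_into outcomes g (g a1))) p"
    unfolding trivial_via_def by blast
  then have c: "\<And>p. is_state n ins outs p \<Longrightarrow> p a1 (inputs_of n \<sigma> a1) = c * snd ?M (r a1) p"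
    using basic_meas_inj_apply[OF g a(1)] inv_into_f_f[OF g a(1)] by simp
  define \<delta> where "\<delta> b = det_state n (const_box n ins b)" for b
  have \<delta>: "is_state n ins outs (\<delta> b)" if "b \<in> outcomes" for b
    unfolding \<delta>_def using fin by (intro det_state_is_state const_box_det_boxes[OF that]) auto
  have \<delta>_val: "\<delta> b a (inputs_of n \<sigma> a) = (if a = b then 1 else 0)" if "b \<in> outcomes" "a \<in> outcomes" for a b
    unfolding \<delta>_def using det_state_const_box[OF that inputs_of_settings[OF \<sigma>]] .
  have M_\<delta>: "snd ?M (r a1) (\<delta> b) = 1" if "b \<in> outcomes" "r b = r a1" for b
  proof -
    have "snd ?M (r a1) (\<delta> b) = (\<Sum>a\<in>{a\<in>outcomes. r a = r a1}. if a = b then 1 else 0)"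
      unfolding basic_meas_def snd_conv using \<delta>_val[OF that(1)] by (intro sum.cong refl) auto
    then show ?thesis using that finite_outcomes by simp
  qed
  have "1 = c" using c[OF \<delta>[OF a(1)]] \<delta>_val[OF a(1,1)] M_\<delta>[OF a(1)] by simp
  moreover have "0 = c" using c[OF \<delta>[OF a(2)]] \<delta>_val[OF a(2,1)] M_\<delta>[OF a(2)] a(3,4) by simp
  ultimately show False by simp
qed

lemma H_M_inj_basic_meas:
  assumes inj: "inj_on r outcomes"
  shows "H_M (basic_meas n outs \<sigma> r) p = strategy_entropy \<sigma> p"
proof -
  have "H_M (basic_meas n outs \<sigma> r) p = - (\<Sum>a\<in>outcomes.
      if (\<Sum>a'\<in>{a'\<in>outcomes. r a' = r a}. p a' (inputs_of n \<sigma> a')) = 0 then 0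
      else (\<Sum>a'\<in>{a'\<in>outcomes. r a' = r a}. p a' (inputs_of n \<sigma> a'))
           * log 2 (\<Sum>a'\<in>{a'\<in>outcomes. r a' = r a}. p a' (inputs_of n \<sigma> a')))"
    unfolding H_M_def shannon_def basic_meas_def fst_conv snd_conv
    by (subst sum.reindex[OF inj]) (simp add: comp_def)
  also have "\<dots> = strategy_entropy \<sigma> p"
    unfolding strategy_entropy_def sum_negf[symmetric]
    by (rule sum.cong) (auto simp: entropy_term_def inj_on_fiber[OF inj])
  finally show ?thesis .
qed

lemma H_basic_eq_Inf_strategy_entropy:
  "H_basic n ins outs p = Inf {strategy_entropy \<sigma> p | \<sigma>. valid_strategy n ins \<sigma>}"
proof -
  have "{H_M M p | M. is_basic n ins outs M \<and> max_informative n ins outs M}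
      = {strategy_entropy \<sigma> p | \<sigma>. valid_strategy n ins \<sigma>}"
  proof safe
    fix M assume "is_basic n ins outs M" "max_informative n ins outs M"
    then obtain \<sigma> r where \<sigma>: "valid_strategy n ins \<sigma>" and M: "M = basic_meas n outs \<sigma> r"
      unfolding is_basic_def by auto
    with \<open>max_informative n ins outs M\<close> have "inj_on r outcomes"
      using max_informative_basic_meas_inj by simp
    then show "\<exists>\<sigma>. H_M M p = strategy_entropy \<sigma> p \<and> valid_strategy n ins \<sigma>"
      using H_M_inj_basic_meas M \<sigma> by auto
  next
    fix \<sigma> assume \<sigma>: "valid_strategy n ins \<sigma>"
    obtain g :: "(nat \<Rightarrow> nat) \<Rightarrow> nat" where g: "inj_on g outcomes"
      using finite_imp_inj_to_nat_seg[OF finite_outcomes] by blast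
    show "\<exists>M. strategy_entropy \<sigma> p = H_M M p \<and> is_basic n ins outs M \<and> max_informative n ins outs M"
      using H_M_inj_basic_meas[OF g] inj_basic_meas_max_informative[OF \<sigma> g] \<sigma> unfolding is_basic_def
      by (intro exI[of _ "basic_meas n outs \<sigma> g"]) auto
  qed
  then show ?thesis unfolding H_basic_def by simp
qed

theorem H_basic_eq_opt_value: "H_basic n ins outs p = opt_value p n []"
  unfolding H_basic_eq_Inf_strategy_entropy
proof (rule cInf_eq_minimum)
  show "opt_value p n [] \<in> {strategy_entropy \<sigma> p | \<sigma>. valid_strategy n ins \<sigma>}"
    using strategy_entropy_opt_strategy[symmetric] valid_opt_strategy by blast
  fix x assume "x \<in> {strategy_entropy \<sigma> p | \<sigma>. valid_strategy n ins \<sigma>}"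
  then obtain \<sigma> where "valid_strategy n ins \<sigma>" "x = strategy_entropy \<sigma> p" by blast
  then show "opt_value p n [] \<le> x" by (simp add: opt_value_le_strategy_entropy)
qed

lemma H_basic_cong:
  assumes "\<And>a x. a \<in> outcomes \<Longrightarrow> x \<in> settings \<Longrightarrow> p a x = q a x"
  shows "H_basic n ins outs p = H_basic n ins outs q"
proof -
  have "strategy_entropy \<sigma> p = strategy_entropy \<sigma> q" if "valid_strategy n ins \<sigma>" for \<sigma>
    using strategy_entropy_cong[OF that assms] .
  then have "{strategy_entropy \<sigma> p | \<sigma>. valid_strategy n ins \<sigma>} = {strategy_entropy \<sigma> q | \<sigma>. valid_strategy n ins \<sigma>}"
    by (intro Collect_cong) metis
  then show ?thesis unfolding H_basic_eq_Inf_strategy_entropy by simp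
qed

end


section \<open>Product states\<close>

definition hist_left :: "nat \<Rightarrow> (nat \<times> nat \<times> nat) list \<Rightarrow> (nat \<times> nat \<times> nat) list" where
  "hist_left n h = filter (\<lambda>e. fst e < n) h"

definition hist_right :: "nat \<Rightarrow> (nat \<times> nat \<times> nat) list \<Rightarrow> (nat \<times> nat \<times> nat) list" where
  "hist_right n h = map (\<lambda>(i, e). (i - n, e)) (filter (\<lambda>e. \<not> fst e < n) h)"

lemma hist_left_snoc: "hist_left n (h @ [(i, e)]) = (if i < n then hist_left n h @ [(i, e)] else hist_left n h)"
  unfolding hist_left_def by simp

lemma hist_right_snoc: "hist_right n (h @ [(i, e)]) = (if i < n then hist_right n h else hist_right n h @ [(i - n, e)])"
  unfolding hist_right_def by simp

lemma length_hist_left_right: "length (hist_left n h) + length (hist_right n h) = length h"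
  unfolding hist_left_def hist_right_def by (simp add: sum_length_filter_compl)

lemma boxes_hist_left: "fst ` set (hist_left n h) = {i \<in> fst ` set h. i < n}"
  unfolding hist_left_def by force

lemma boxes_hist_right: "j \<in> fst ` set (hist_right n h) \<longleftrightarrow> n + j \<in> fst ` set h"
  unfolding hist_right_def by (force simp: case_prod_beta)

lemma distinct_hist_left: "distinct (map fst h) \<Longrightarrow> distinct (map fst (hist_left n h))"
  unfolding hist_left_def by (simp add: distinct_map_filter)

lemma distinct_hist_right: "distinct (map fst h) \<Longrightarrow> distinct (map fst (hist_right n h))"
proof -
  assume "distinct (map fst h)"
  then have "distinct (map fst (filter (\<lambda>e. \<not> fst e < n) h))" by (simp add: distinct_map_filter)
  moreover have "inj_on (\<lambda>i. i - n) (set (map fst (filter (\<lambda>e. \<not> fst e < n) h)))"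
    by (auto simp: inj_on_def)
  moreover have "map fst (hist_right n h) = map (\<lambda>i. i - n) (map fst (filter (\<lambda>e. \<not> fst e < n) h))"
    unfolding hist_right_def by (simp add: case_prod_beta)
  ultimately show ?thesis by (simp add: distinct_map comp_inj_on)
qed

lemma wf_history_hist_left:
  "wf_history (n + m) (join_sets n insX insY) h \<Longrightarrow> wf_history n insX (hist_left n h)"
  unfolding wf_history_def hist_left_def join_sets_def by (auto simp: distinct_map_filter)

lemma wf_history_hist_right:
  "wf_history (n + m) (join_sets n insX insY) h \<Longrightarrow> wf_history m insY (hist_right n h)"
  using distinct_hist_right[of h n] unfolding wf_history_def join_sets_def
  by (auto simp: hist_right_def)

lemma left_tup_join_tup: "a \<in> tuples n S \<Longrightarrow> left_tup n (join_tup n m a b) = a"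
  unfolding left_tup_def join_tup_def by (auto simp: fun_eq_iff tuples_out)

lemma right_tup_join_tup: "b \<in> tuples m S \<Longrightarrow> right_tup n m (join_tup n m a b) = b"
  unfolding right_tup_def join_tup_def by (auto simp: fun_eq_iff tuples_out)

lemma left_tup_tuples:
  assumes "c \<in> tuples (n + m) (join_sets n S T)"
  shows "left_tup n c \<in> tuples n S"
proof -
  have "c i \<in> S i" if "i < n" for i using tuples_mem[OF assms, of i] that unfolding join_sets_def by simp
  then show ?thesis unfolding left_tup_def tuples_def by (simp add: restrict_PiE_iff)
qed

lemma right_tup_tuples:
  assumes "c \<in> tuples (n + m) (join_sets n S T)"
  shows "right_tup n m c \<in> tuples m T"
proof -
  have "c (n + j) \<in> T j" if "j < m" for j using tuples_mem[OF assms, of "n + j"] that unfolding join_sets_def by simp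
  then show ?thesis unfolding right_tup_def tuples_def by (simp add: restrict_PiE_iff)
qed

locale product_system =
  fixes n m :: nat and insX outsX insY outsY :: "nat \<Rightarrow> nat set" and pX pY :: bstate
  assumes finX: "\<And>i. i < n \<Longrightarrow> finite (insX i) \<and> insX i \<noteq> {} \<and> finite (outsX i) \<and> outsX i \<noteq> {}"
    and finY: "\<And>j. j < m \<Longrightarrow> finite (insY j) \<and> insY j \<noteq> {} \<and> finite (outsY j) \<and> outsY j \<noteq> {}"
    and stX: "is_state n insX outsX pX"
    and stY: "is_state m insY outsY pY"
begin

abbreviation "insJ \<equiv> join_sets n insX insY"
abbreviation "outsJ \<equiv> join_sets n outsX outsY"
abbreviation "pJ \<equiv> product_state n m pX pY"

sublocale X: box_system n insX outsX using finX by unfold_locales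
sublocale Y: box_system m insY outsY using finY by unfold_locales
sublocale J: box_system "n + m" insJ outsJ
  using finX finY by unfold_locales (auto simp: join_sets_def)

lemma hist_inputs_hist_left: "X.hist_inputs (hist_left n h) = left_tup n (J.hist_inputs h)"
proof -
  have "filter (\<lambda>e. fst e = i) (hist_left n h) = filter (\<lambda>e. fst e = i) h" if "i < n" for i
    unfolding hist_left_def using that by (induction h) auto
  then show ?thesis unfolding X.hist_inputs_def J.hist_inputs_def left_tup_def
    by (auto simp: fun_eq_iff boxes_hist_left join_sets_def)
qed

lemma hist_inputs_hist_right: "Y.hist_inputs (hist_right n h) = right_tup n m (J.hist_inputs h)"
proof -
  have "filter (\<lambda>e. fst e = j) (hist_right n h) = map (\<lambda>(i, e). (i - n, e)) (filter (\<lambda>e. fst e = n + j) h)" for j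
    unfolding hist_right_def by (induction h) auto
  moreover have "filter (\<lambda>e. fst e = n + j) h \<noteq> []" if "n + j \<in> fst ` set h" for j
    using that by (force simp: filter_empty_conv)
  ultimately show ?thesis unfolding Y.hist_inputs_def J.hist_inputs_def right_tup_def
    by (auto simp: fun_eq_iff boxes_hist_right join_sets_def hd_map case_prod_beta)
qed

text \<open>At a leaf, \<open>-u v log (u v) = -v (u log u) - u (v log v)\<close>; \<open>product_value\<close> is this split propagated
  to inner nodes, with each part continued optimally.\<close>

definition product_value :: "(nat \<times> nat \<times> nat) list \<Rightarrow> real" where
  "product_value h = Y.hist_prob pY (hist_right n h) * X.opt_value pX (n - length (hist_left n h)) (hist_left n h)
                   + X.hist_prob pX (hist_left n h) * Y.opt_value pY (m - length (hist_right n h)) (hist_right n h)"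

lemma product_value_Nil: "product_value [] = X.opt_value pX n [] + Y.opt_value pY m []"
  unfolding product_value_def hist_left_def hist_right_def
  using X.hist_prob_Nil[OF stX] Y.hist_prob_Nil[OF stY] by simp

lemma consistent_hist_left: "J.consistent c h \<Longrightarrow> X.consistent (left_tup n c) (hist_left n h)"
  unfolding J.consistent_def X.consistent_def hist_left_def left_tup_def by auto

lemma consistent_hist_right:
  "J.consistent c h \<Longrightarrow> set (map fst h) \<subseteq> {..<n + m} \<Longrightarrow> Y.consistent (right_tup n m c) (hist_right n h)"
  unfolding J.consistent_def Y.consistent_def hist_right_def right_tup_def by fastforce

lemma product_value_run:
  assumes \<sigma>: "valid_strategy (n + m) insJ \<sigma>" and c: "c \<in> J.outcomes"
  shows "product_value (run \<sigma> c (n + m)) = entropy_term (pJ c (inputs_of (n + m) \<sigma> c))"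
proof -
  define h where "h = run \<sigma> c (n + m)"
  define z where "z = inputs_of (n + m) \<sigma> c"
  have full: "fst ` set h = {..<n + m}" unfolding h_def by (rule boxes_run[OF \<sigma>])
  have h: "wf_history (n + m) insJ h" unfolding h_def by (rule wf_history_run[OF \<sigma> order_refl])
  have full_left: "fst ` set (hist_left n h) = {..<n}" unfolding boxes_hist_left full by auto
  have "j \<in> fst ` set (hist_right n h) \<longleftrightarrow> j < m" for j unfolding boxes_hist_right full by simp
  then have full_right: "fst ` set (hist_right n h) = {..<m}" by auto
  have len: "length (hist_left n h) = n" "length (hist_right n h) = m"
    using wf_history_length[OF wf_history_hist_left[OF h]] wf_history_length[OF wf_history_hist_right[OF h]]
      full_left full_right by simp_all
  have z: "z = J.hist_inputs h" unfolding z_def h_def by (rule J.inputs_of_hist_inputs[OF \<sigma>])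
  have cons: "J.consistent c h" unfolding h_def by (rule J.consistent_run)
  have PX: "X.hist_prob pX (hist_left n h) = pX (left_tup n c) (left_tup n z)"
    using X.hist_prob_complete[OF full_left left_tup_tuples[OF c] consistent_hist_left[OF cons]]
    by (simp add: z hist_inputs_hist_left)
  have PY: "Y.hist_prob pY (hist_right n h) = pY (right_tup n m c) (right_tup n m z)"
    using Y.hist_prob_complete[OF full_right right_tup_tuples[OF c] consistent_hist_right[OF cons]] h
    unfolding wf_history_def by (simp add: z hist_inputs_hist_right)
  have zJ: "z \<in> J.settings" unfolding z_def by (rule J.inputs_of_settings[OF \<sigma>])
  have "0 \<le> pX (left_tup n c) (left_tup n z)" "0 \<le> pY (right_tup n m c) (right_tup n m z)"
    using stX stY left_tup_tuples[OF c] left_tup_tuples[OF zJ] right_tup_tuples[OF c] right_tup_tuples[OF zJ]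
    unfolding is_state_def by blast+
  then show ?thesis
    unfolding h_def[symmetric] z_def[symmetric] product_value_def product_state_def
    by (simp add: len PX PY entropy_term_mult)
qed

lemma product_value_children_left:
  assumes h: "wf_history (n + m) insJ h" and move: "(i, \<xi>) \<in> X.moves (hist_left n h)"
  shows "product_value h \<le> (\<Sum>\<alpha>\<in>outsX i. product_value (h @ [(i, \<xi>, \<alpha>)]))"
    and "X.opt_strategy pX (hist_left n h) = (i, \<xi>) \<Longrightarrow> product_value h = (\<Sum>\<alpha>\<in>outsX i. product_value (h @ [(i, \<xi>, \<alpha>)]))"
proof -
  let ?hX = "hist_left n h" and ?hY = "hist_right n h"
  let ?U = "\<lambda>\<alpha>. X.opt_value pX (n - Suc (length ?hX)) (?hX @ [(i, \<xi>, \<alpha>)])"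
  let ?rest = "X.hist_prob pX ?hX * Y.opt_value pY (m - length ?hY) ?hY"
  have hX: "wf_history n insX ?hX" by (rule wf_history_hist_left[OF h])
  have i: "i < n" "i \<notin> fst ` set ?hX" using move unfolding X.moves_def by auto
  have len: "length ?hX < n" by (rule wf_history_length_less[OF hX i])
  have "(\<Sum>\<alpha>\<in>outsX i. product_value (h @ [(i, \<xi>, \<alpha>)]))
      = (\<Sum>\<alpha>\<in>outsX i. Y.hist_prob pY ?hY * ?U \<alpha> + X.hist_prob pX (?hX @ [(i, \<xi>, \<alpha>)]) * Y.opt_value pY (m - length ?hY) ?hY)"
    unfolding product_value_def using i by (simp add: hist_left_snoc hist_right_snoc)
  also have "\<dots> = Y.hist_prob pY ?hY * (\<Sum>\<alpha>\<in>outsX i. ?U \<alpha>) + ?rest"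
    using X.hist_prob_children[OF stX hX move] by (simp add: sum.distrib sum_distrib_left flip: sum_distrib_right)
  finally have children: "(\<Sum>\<alpha>\<in>outsX i. product_value (h @ [(i, \<xi>, \<alpha>)])) = Y.hist_prob pY ?hY * (\<Sum>\<alpha>\<in>outsX i. ?U \<alpha>) + ?rest" .
  have node: "product_value h = Y.hist_prob pY ?hY * X.opt_value pX (Suc (n - Suc (length ?hX))) ?hX + ?rest"
    unfolding product_value_def using len by (simp add: Suc_diff_Suc)
  have "0 \<le> Y.hist_prob pY ?hY" by (rule Y.hist_prob_nonneg[OF stY wf_history_hist_right[OF h]])
  then show "product_value h \<le> (\<Sum>\<alpha>\<in>outsX i. product_value (h @ [(i, \<xi>, \<alpha>)]))"
    unfolding node children using X.opt_value_le[OF move] by (simp add: mult_left_mono)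
  assume "X.opt_strategy pX ?hX = (i, \<xi>)"
  then have "(\<Sum>\<alpha>\<in>outsX i. ?U \<alpha>) = X.opt_value pX (n - length ?hX) ?hX"
    using X.opt_strategy[of ?hX pX] hX len unfolding wf_history_def by simp
  then show "product_value h = (\<Sum>\<alpha>\<in>outsX i. product_value (h @ [(i, \<xi>, \<alpha>)]))"
    unfolding node children using len by (simp add: Suc_diff_Suc)
qed

lemma product_value_children_right:
  assumes h: "wf_history (n + m) insJ h" and move: "(j, \<xi>) \<in> Y.moves (hist_right n h)"
  shows "product_value h \<le> (\<Sum>\<alpha>\<in>outsY j. product_value (h @ [(n + j, \<xi>, \<alpha>)]))"
    and "Y.opt_strategy pY (hist_right n h) = (j, \<xi>) \<Longrightarrow> product_value h = (\<Sum>\<alpha>\<in>outsY j. product_value (h @ [(n + j, \<xi>, \<alpha>)]))"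
proof -
  let ?hX = "hist_left n h" and ?hY = "hist_right n h"
  let ?U = "\<lambda>\<alpha>. Y.opt_value pY (m - Suc (length ?hY)) (?hY @ [(j, \<xi>, \<alpha>)])"
  let ?rest = "Y.hist_prob pY ?hY * X.opt_value pX (n - length ?hX) ?hX"
  have hY: "wf_history m insY ?hY" by (rule wf_history_hist_right[OF h])
  have j: "j < m" "j \<notin> fst ` set ?hY" using move unfolding Y.moves_def by auto
  have len: "length ?hY < m" by (rule wf_history_length_less[OF hY j])
  have "(\<Sum>\<alpha>\<in>outsY j. product_value (h @ [(n + j, \<xi>, \<alpha>)]))
      = (\<Sum>\<alpha>\<in>outsY j. Y.hist_prob pY (?hY @ [(j, \<xi>, \<alpha>)]) * X.opt_value pX (n - length ?hX) ?hX + X.hist_prob pX ?hX * ?U \<alpha>)"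
    unfolding product_value_def by (simp add: hist_left_snoc hist_right_snoc)
  also have "\<dots> = ?rest + X.hist_prob pX ?hX * (\<Sum>\<alpha>\<in>outsY j. ?U \<alpha>)"
    using Y.hist_prob_children[OF stY hY move] by (simp add: sum.distrib sum_distrib_left flip: sum_distrib_right)
  finally have children: "(\<Sum>\<alpha>\<in>outsY j. product_value (h @ [(n + j, \<xi>, \<alpha>)])) = ?rest + X.hist_prob pX ?hX * (\<Sum>\<alpha>\<in>outsY j. ?U \<alpha>)" .
  have node: "product_value h = ?rest + X.hist_prob pX ?hX * Y.opt_value pY (Suc (m - Suc (length ?hY))) ?hY"
    unfolding product_value_def using len by (simp add: Suc_diff_Suc)
  have "0 \<le> X.hist_prob pX ?hX" by (rule X.hist_prob_nonneg[OF stX wf_history_hist_left[OF h]])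
  then show "product_value h \<le> (\<Sum>\<alpha>\<in>outsY j. product_value (h @ [(n + j, \<xi>, \<alpha>)]))"
    unfolding node children using Y.opt_value_le[OF move] by (simp add: mult_left_mono)
  assume "Y.opt_strategy pY ?hY = (j, \<xi>)"
  then have "(\<Sum>\<alpha>\<in>outsY j. ?U \<alpha>) = Y.opt_value pY (m - length ?hY) ?hY"
    using Y.opt_strategy[of ?hY pY] hY len unfolding wf_history_def by simp
  then show "product_value h = (\<Sum>\<alpha>\<in>outsY j. product_value (h @ [(n + j, \<xi>, \<alpha>)]))"
    unfolding node children using len by (simp add: Suc_diff_Suc)
qed

definition product_strategy :: strategy where
  "product_strategy h = (if length (hist_left n h) < n then X.opt_strategy pX (hist_left n h)
                         else (n + fst (Y.opt_strategy pY (hist_right n h)), snd (Y.opt_strategy pY (hist_right n h))))"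

lemma product_strategy_left:
  assumes "distinct (map fst h)" "length (hist_left n h) < n"
  shows "X.opt_strategy pX (hist_left n h) \<in> X.moves (hist_left n h)"
proof (rule conjunct1[OF X.opt_strategy])
  show "distinct (map fst (hist_left n h))" using assms(1) by (rule distinct_hist_left)
  show "set (map fst (hist_left n h)) \<subseteq> {..<n}" unfolding hist_left_def by auto
qed (rule assms(2))

lemma product_strategy_right:
  assumes "distinct (map fst h)" "set (map fst h) \<subseteq> {..<n + m}" "length h < n + m" "\<not> length (hist_left n h) < n"
  shows "Y.opt_strategy pY (hist_right n h) \<in> Y.moves (hist_right n h)"
proof (rule conjunct1[OF Y.opt_strategy])
  show "distinct (map fst (hist_right n h))" using assms(1) by (rule distinct_hist_right)
  show "set (map fst (hist_right n h)) \<subseteq> {..<m}" using assms(2) unfolding hist_right_def by auto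
  show "length (hist_right n h) < m" using assms(3,4) length_hist_left_right[of n h] by linarith
qed

lemma valid_product_strategy: "valid_strategy (n + m) insJ product_strategy"
  unfolding valid_strategy_def
proof (intro allI impI)
  fix h :: "(nat \<times> nat \<times> nat) list"
  assume h: "distinct (map fst h) \<and> set (map fst h) \<subseteq> {..<n + m} \<and> length h < n + m"
  show "fst (product_strategy h) < n + m \<and> fst (product_strategy h) \<notin> set (map fst h) \<and>
      snd (product_strategy h) \<in> insJ (fst (product_strategy h))"
  proof (cases "length (hist_left n h) < n")
    case True
    then show ?thesis using product_strategy_left[of h] h
      unfolding product_strategy_def X.moves_def boxes_hist_left by (force simp: join_sets_def)
  next
    case False
    then show ?thesis using product_strategy_right[of h] h
      unfolding product_strategy_def Y.moves_def boxes_hist_right by (force simp: join_sets_def)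
  qed
qed

lemma product_value_children:
  assumes h: "wf_history (n + m) insJ h" and move: "(i, \<xi>) \<in> J.moves h"
  shows "product_value h \<le> (\<Sum>\<alpha>\<in>outsJ i. product_value (h @ [(i, \<xi>, \<alpha>)]))"
    and "product_strategy h = (i, \<xi>) \<Longrightarrow> product_value h = (\<Sum>\<alpha>\<in>outsJ i. product_value (h @ [(i, \<xi>, \<alpha>)]))"
proof -
  have i: "i < n + m" "i \<notin> fst ` set h" "\<xi> \<in> insJ i" using move unfolding J.moves_def by auto
  have "product_value h \<le> (\<Sum>\<alpha>\<in>outsJ i. product_value (h @ [(i, \<xi>, \<alpha>)])) \<and>
      (product_strategy h = (i, \<xi>) \<longrightarrow> product_value h = (\<Sum>\<alpha>\<in>outsJ i. product_value (h @ [(i, \<xi>, \<alpha>)])))"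
  proof (cases "i < n")
    case True
    then have "(i, \<xi>) \<in> X.moves (hist_left n h)"
      using i unfolding X.moves_def boxes_hist_left by (auto simp: join_sets_def)
    moreover have "X.opt_strategy pX (hist_left n h) = (i, \<xi>)" if "product_strategy h = (i, \<xi>)"
      using that True Y.opt_strategy unfolding product_strategy_def by (auto split: if_splits)
    ultimately show ?thesis using product_value_children_left[OF h] True by (simp add: join_sets_def)
  next
    case False
    define j where "j = i - n"
    have ij: "i = n + j" using False unfolding j_def by simp
    have "(j, \<xi>) \<in> Y.moves (hist_right n h)"
      using i False unfolding Y.moves_def boxes_hist_right ij by (auto simp: join_sets_def)
    moreover have "Y.opt_strategy pY (hist_right n h) = (j, \<xi>)" if "product_strategy h = (i, \<xi>)"
    proof -
      have "\<not> length (hist_left n h) < n"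
      proof
        assume "length (hist_left n h) < n"
        then have "X.opt_strategy pX (hist_left n h) \<in> X.moves (hist_left n h)"
          using product_strategy_left h unfolding wf_history_def by blast
        with that \<open>length (hist_left n h) < n\<close> False show False
          unfolding product_strategy_def X.moves_def by auto
      qed
      with that show ?thesis unfolding product_strategy_def ij by (auto simp: prod_eq_iff)
    qed
    ultimately show ?thesis using product_value_children_right[OF h] False unfolding ij
      by (simp add: join_sets_def)
  qed
  then show "product_value h \<le> (\<Sum>\<alpha>\<in>outsJ i. product_value (h @ [(i, \<xi>, \<alpha>)]))"
    and "product_strategy h = (i, \<xi>) \<Longrightarrow> product_value h = (\<Sum>\<alpha>\<in>outsJ i. product_value (h @ [(i, \<xi>, \<alpha>)]))"
    by auto
qed

lemma product_value_le_strategy_entropy: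
  assumes \<sigma>: "valid_strategy (n + m) insJ \<sigma>"
  shows "product_value [] \<le> J.strategy_entropy \<sigma> pJ"
  unfolding J.strategy_entropy_def
proof (rule J.backward_induction[OF \<sigma>])
  fix h assume "wf_history (n + m) insJ h" "length h < n + m"
  then show "product_value h \<le> (\<Sum>\<alpha>\<in>outsJ (fst (\<sigma> h)). product_value (h @ [(fst (\<sigma> h), snd (\<sigma> h), \<alpha>)]))"
    using product_value_children(1) J.valid_strategy_move[OF \<sigma>] by simp
qed (simp add: product_value_run[OF \<sigma>])

lemma strategy_entropy_product_strategy: "J.strategy_entropy product_strategy pJ = product_value []"
  unfolding J.strategy_entropy_def
proof (rule J.backward_induction_eq[OF valid_product_strategy, symmetric])
  fix h assume "wf_history (n + m) insJ h" "length h < n + m"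
  then show "product_value h = (\<Sum>\<alpha>\<in>outsJ (fst (product_strategy h)).
      product_value (h @ [(fst (product_strategy h), snd (product_strategy h), \<alpha>)]))"
    using product_value_children(2) J.valid_strategy_move[OF valid_product_strategy] by simp
qed (simp add: product_value_run[OF valid_product_strategy])

theorem H_basic_product_state: "H_basic (n + m) insJ outsJ pJ = X.opt_value pX n [] + Y.opt_value pY m []"
proof -
  have "J.opt_value pJ (n + m) [] \<le> J.strategy_entropy product_strategy pJ"
    by (rule J.opt_value_le_strategy_entropy[OF valid_product_strategy])
  moreover have "product_value [] \<le> J.strategy_entropy (J.opt_strategy pJ) pJ"
    by (rule product_value_le_strategy_entropy[OF J.valid_opt_strategy])
  ultimately have "J.opt_value pJ (n + m) [] = product_value []"
    unfolding strategy_entropy_product_strategy J.strategy_entropy_opt_strategy by simp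
  then show ?thesis unfolding J.H_basic_eq_opt_value product_value_Nil .
qed

lemma reduce_left_product_state:
  assumes "a \<in> X.outcomes" "x \<in> X.settings"
  shows "reduce_left n m insY outsY pJ a x = pX a x"
proof -
  define y0 where "y0 = (SOME y. y \<in> Y.settings)"
  have y0: "y0 \<in> Y.settings" unfolding y0_def using Y.settings_nonempty by (simp add: some_in_eq)
  have "reduce_left n m insY outsY pJ a x = (\<Sum>b\<in>Y.outcomes. pX a x * pY b y0)"
    unfolding reduce_left_def y0_def[symmetric] product_state_def
    using assms y0 by (intro sum.cong refl) (simp add: left_tup_join_tup right_tup_join_tup)
  also have "\<dots> = pX a x" using stY y0 unfolding is_state_def by (simp add: sum_distrib_left[symmetric])
  finally show ?thesis .
qed

lemma reduce_right_product_state: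
  assumes "b \<in> Y.outcomes" "y \<in> Y.settings"
  shows "reduce_right n m insX outsX pJ b y = pY b y"
proof -
  define x0 where "x0 = (SOME x. x \<in> X.settings)"
  have x0: "x0 \<in> X.settings" unfolding x0_def using X.settings_nonempty by (simp add: some_in_eq)
  have "reduce_right n m insX outsX pJ b y = (\<Sum>a\<in>X.outcomes. pX a x0 * pY b y)"
    unfolding reduce_right_def x0_def[symmetric] product_state_def
    using assms x0 by (intro sum.cong refl) (simp add: left_tup_join_tup right_tup_join_tup)
  also have "\<dots> = pY b y" using stX x0 unfolding is_state_def by (simp add: sum_distrib_right[symmetric])
  finally show ?thesis .
qed

end

theorem lemma6:
  fixes n m :: nat
    and insX outsX insY outsY :: "nat \<Rightarrow> nat set"
    and pX pY p :: bstate
  assumes finX: "\<And>i. i < n \<Longrightarrow> finite (insX i) \<and> insX i \<noteq> {} \<and> finite (outsX i) \<and> outsX i \<noteq> {}"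
    and finY: "\<And>j. j < m \<Longrightarrow> finite (insY j) \<and> insY j \<noteq> {} \<and> finite (outsY j) \<and> outsY j \<noteq> {}"
    and stX: "is_state n insX outsX pX"
    and stY: "is_state m insY outsY pY"
    and prod: "p = product_state n m pX pY"
  shows "H_basic (n + m) (join_sets n insX insY) (join_sets n outsX outsY) p
       = H_basic n insX outsX (reduce_left n m insY outsY p)
         + H_basic m insY outsY (reduce_right n m insX outsX p)"
proof -
  interpret product_system n m insX outsX insY outsY pX pY
    using finX finY stX stY by unfold_locales
  have "H_basic n insX outsX (reduce_left n m insY outsY p) = X.opt_value pX n []"
    unfolding prod X.H_basic_eq_opt_value[symmetric] by (rule X.H_basic_cong[OF reduce_left_product_state])
  moreover have "H_basic m insY outsY (reduce_right n m insX outsX p) = Y.opt_value pY m []"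
    unfolding prod Y.H_basic_eq_opt_value[symmetric] by (rule Y.H_basic_cong[OF reduce_right_product_state])
  ultimately show ?thesis unfolding prod H_basic_product_state by simp
qed

end
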